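(* Let $X,Y$ be $c$-free with respect to $(\varphi,\psi)$ on $\mathbb{C}\langle X,Y\rangle$, let $A,B\in M_N(\mathbb{C})$ and $\mathbf{\Psi}=(I-z(AX+BY))^{-1}=\sum_{n\ge0}z^n(AX+BY)^n$. Define $H_X=\beta^{b,\psi}_X(\mathbf{\Psi})$, $H_Y=\beta^{b,\psi}_Y(\mathbf{\Psi})$, $F_X=\beta^{\delta,\psi}_X(X\mathbf{\Psi})$, $F_Y=\beta^{\delta,\psi}_Y(Y\mathbf{\Psi})$, $F^\varphi_X=\beta^{\delta,\varphi}_X(X\mathbf{\Psi})$, $F^\varphi_Y=\beta^{\delta,\varphi}_Y(Y\mathbf{\Psi})$. Then, as formal power series in $z$ with coefficients in $M_N(\mathbb{C})$, $$H_X=(I-zAF_X)^{-1},\quad H_Y=(I-zBF_Y)^{-1},\quad F_X=\tilde\eta^\psi_X(zH_YA),\quad F_Y=\tilde\eta^\psi_Y(zH_XB),$$ $$F^\varphi_X=\tilde\eta^\varphi_X(zH_YA),\qquad F^\varphi_Y=\tilde\eta^\varphi_Y(zH_XB).$$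
   Context: $X,Y$ are $c$-free w.r.t. $(\varphi,\psi)$ (unital functionals on $\mathbb{C}\langle X,Y\rangle$) if $\psi(u_1\cdots u_n)=0$ and $\varphi(u_1\cdots u_n)=\prod\varphi(u_j)$ whenever the $u_j$ alternate between $\mathbb{C}\langle X\rangle$ and $\mathbb{C}\langle Y\rangle$ and $\psi(u_j)=0$. Boolean cumulants $\beta^\theta_n$ of $\theta$: $\theta(a_1\cdots a_n)=\sum_{k}\beta^\theta_k(a_1,\dots,a_k)\theta(a_{k+1}\cdots a_n)$. Block factorization of a monomial $W\neq1$: $W=U_1\cdots U_n$ into nonempty pure-$X$/pure-$Y$ monomials alternating. $\beta^{b,\theta}_X(1)=1$, $\beta^{b,\theta}_X(W)=\beta^\theta_n(U_1,\dots,U_n)$ if $W$ starts and ends with the letter $X$, else $0$; $\beta^{\delta,\theta}_X(1)=1$, $\beta^{\delta,\theta}_X(Z_1\cdots Z_k)=\beta^\theta_k(Z_1,\dots,Z_k)$ if $Z_1=Z_k=X$, else $0$; similarly with $Y$; extended linearly. All functionals are applied entrywise to matrices and coefficientwise to formal power series in $z$. For a matrix-valued formal power series $C$ with zero constant term, $\tilde\eta^\theta_X(C):=\sum_{k\ge1}\beta^\theta_k(X,\dots,X)C^{k-1}$ (similarly for $Y$). *)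

theory Defs
  imports "HOL-Analysis.Analysis"
begin

text \<open>Monomials in the letters X, Y are lists of booleans: True = X, False = Y.
  A (unital) linear functional on C<X,Y> is given by its values on monomials,
  a function bool list => complex with value 1 on the empty word.
  Polynomials are finitely supported coefficient functions bool list => complex.\<close>

type_synonym ncpoly = "bool list \<Rightarrow> complex"

definition supp :: "ncpoly \<Rightarrow> bool list set" where
  "supp p = {w. p w \<noteq> 0}"

definition lin :: "(bool list \<Rightarrow> complex) \<Rightarrow> ncpoly \<Rightarrow> complex" where
  "lin \<theta> p = (\<Sum>w\<in>supp p. p w * \<theta> w)"

definition pone :: ncpoly where
  "pone w = (if w = [] then 1 else 0)"

definition pmul :: "ncpoly \<Rightarrow> ncpoly \<Rightarrow> ncpoly" where
  "pmul p q w = (\<Sum>k\<le>length w. p (take k w) * q (drop k w))"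

definition pprod :: "ncpoly list \<Rightarrow> ncpoly" where
  "pprod us = foldr pmul us pone"

text \<open>Polynomial in the single letter b (b = True: C<X>, b = False: C<Y>).\<close>
definition in_alg :: "bool \<Rightarrow> ncpoly \<Rightarrow> bool" where
  "in_alg b p \<longleftrightarrow> finite (supp p) \<and> (\<forall>w\<in>supp p. \<forall>c\<in>set w. c = b)"

definition unital :: "(bool list \<Rightarrow> complex) \<Rightarrow> bool" where
  "unital \<theta> \<longleftrightarrow> \<theta> [] = 1"

definition c_free :: "(bool list \<Rightarrow> complex) \<Rightarrow> (bool list \<Rightarrow> complex) \<Rightarrow> bool" where
  "c_free \<phi> \<psi> \<longleftrightarrow>
     (\<forall>us b. us \<noteq> [] \<longrightarrow>
        (\<forall>j<length us. in_alg (if even j then b else \<not> b) (us ! j)) \<longrightarrow>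
        (\<forall>j<length us. lin \<psi> (us ! j) = 0) \<longrightarrow>
        lin \<psi> (pprod us) = 0 \<and> lin \<phi> (pprod us) = (\<Prod>j<length us. lin \<phi> (us ! j)))"

text \<open>bcum theta [a1,...,an] = beta^theta_n(a1,...,an) for monomial arguments
  (multilinear, so determined by monomials), from the recursion
  theta(a1...an) = sum_{k=1}^n beta_k(a1..ak) theta(a_{k+1}...a_n).\<close>
function bcum :: "(bool list \<Rightarrow> complex) \<Rightarrow> bool list list \<Rightarrow> complex" where
  "bcum \<theta> as = (if as = [] then 0 else
      \<theta> (concat as) - (\<Sum>k\<in>{1..<length as}. bcum \<theta> (take k as) * \<theta> (concat (drop k as))))"
  by pat_completeness auto
termination by (relation "Wellfounded.measure (\<lambda>(\<theta>, as). length as)") auto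

declare bcum.simps [simp del]

text \<open>Block factorization into maximal pure-X / pure-Y runs.\<close>
fun blocks :: "bool list \<Rightarrow> bool list list" where
  "blocks [] = []"
| "blocks (c # w) = (case blocks w of [] \<Rightarrow> [[c]]
      | b # bs \<Rightarrow> (if hd b = c then (c # b) # bs else [c] # b # bs))"

definition beta_b :: "(bool list \<Rightarrow> complex) \<Rightarrow> bool \<Rightarrow> bool list \<Rightarrow> complex" where
  "beta_b \<theta> L W = (if W = [] then 1
      else if hd W = L \<and> last W = L then bcum \<theta> (blocks W) else 0)"

definition beta_delta :: "(bool list \<Rightarrow> complex) \<Rightarrow> bool \<Rightarrow> bool list \<Rightarrow> complex" where
  "beta_delta \<theta> L W = (if W = [] then 1
      else if hd W = L \<and> last W = L then bcum \<theta> (map (\<lambda>c. [c]) W) else 0)"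

definition smat :: "complex \<Rightarrow> complex^'n^'n \<Rightarrow> complex^'n^'n" where
  "smat c M = (\<chi> i j. c * M $ i $ j)"

text \<open>Matrix coefficient of the word w in (AX+BY)^{|w|}: C_{w1} ... C_{wn}, C_X = A, C_Y = B.\<close>
definition wmat :: "complex^'n^'n \<Rightarrow> complex^'n^'n \<Rightarrow> bool list \<Rightarrow> complex^'n^'n" where
  "wmat A B w = foldr (\<lambda>c M. (if c then A else B) ** M) w (mat 1)"

text \<open>Entrywise and coefficientwise application of the linear functional L to
  Psi = sum_n z^n (AX+BY)^n, with (AX+BY)^n = sum_{|w|=n} wmat A B w * w.\<close>
definition apply_Psi :: "(bool list \<Rightarrow> complex) \<Rightarrow> complex^'n^'n \<Rightarrow> complex^'n^'n \<Rightarrow> nat \<Rightarrow> complex^'n^'n" where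
  "apply_Psi L A B n = (\<Sum>w\<in>{w. length w = n}. smat (L w) (wmat A B w))"

text \<open>Same for the letter Z times Psi (Z = X if c, Y otherwise).\<close>
definition apply_ZPsi :: "(bool list \<Rightarrow> complex) \<Rightarrow> bool \<Rightarrow> complex^'n^'n \<Rightarrow> complex^'n^'n \<Rightarrow> nat \<Rightarrow> complex^'n^'n" where
  "apply_ZPsi L c A B n = (\<Sum>w\<in>{w. length w = n}. smat (L (c # w)) (wmat A B w))"

type_synonym ('n) mps = "nat \<Rightarrow> complex^('n::finite)^'n"

definition ps_one :: "('n::finite) mps" where
  "ps_one n = (if n = 0 then mat 1 else 0)"

definition ps_mult :: "('n::finite) mps \<Rightarrow> ('n::finite) mps \<Rightarrow> 'n mps" where
  "ps_mult P Q n = (\<Sum>k\<le>n. P k ** Q (n - k))"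

definition ps_pow :: "('n::finite) mps \<Rightarrow> nat \<Rightarrow> 'n mps" where
  "ps_pow P k = (ps_mult P ^^ k) ps_one"

definition ps_z :: "('n::finite) mps \<Rightarrow> 'n mps" where
  "ps_z P n = (if n = 0 then 0 else P (n - 1))"

definition ps_inverse_of :: "('n::finite) mps \<Rightarrow> 'n mps \<Rightarrow> bool" where
  "ps_inverse_of Q P \<longleftrightarrow> ps_mult Q P = ps_one \<and> ps_mult P Q = ps_one"

text \<open>tilde eta^theta_L(C) = sum_{k>=1} beta_k(L,...,L) C^{k-1}, for C with zero
  constant term; the n-th coefficient only receives contributions from k <= n+1.\<close>
definition eta_tilde :: "(bool list \<Rightarrow> complex) \<Rightarrow> bool \<Rightarrow> ('n::finite) mps \<Rightarrow> 'n mps" where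
  "eta_tilde \<theta> L C n = (\<Sum>k\<in>{1..n+1}. smat (bcum \<theta> (replicate k [L])) (ps_pow C (k - 1) n))"

end

theory Submission
  imports Defs
begin

text \<open>
  Everything is first proved for word series, i.e. functions from words in \<open>X, Y\<close> to \<open>\<complex>\<close>
  with the concatenation product; replacing a word \<open>w\<close> by \<open>z\<^bsup>|w|\<^esup>\<close> times the product of the
  matrices \<open>A\<close> (for \<open>X\<close>) and \<open>B\<close> (for \<open>Y\<close>) is multiplicative and turns the word identities into
  the matrix identities.

  Boolean cumulants are values of nested centerings,
  \<open>\<beta>\<^sub>n(a\<^sub>1, \<dots>, a\<^sub>n) = \<theta>(a\<^sub>1 Q(a\<^sub>2 Q(\<dots> Q(a\<^sub>n))))\<close> with \<open>Q p = p - \<theta>(p) 1\<close>.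
  By c-freeness, the span \<open>V\<^sub>E\<close> of alternating products of \<open>\<psi>\<close>-centred elements whose last
  factor lies in \<open>\<complex>\<langle>E\<rangle>\<close> is killed by \<open>\<psi>\<close>, is stable under left multiplication by \<open>\<complex>\<langle>\<not> E\<rangle>\<close>
  and under \<open>Q\<close> after left multiplication by \<open>\<complex>\<langle>E\<rangle>\<close>, and both \<open>\<phi>\<close> and \<open>\<psi>\<close> factorise on
  products \<open>v x\<close> with \<open>v \<in> V\<^sub>E\<close>, \<open>x \<in> \<complex>\<langle>\<not> E\<rangle>\<close>. Following the nested centering of a word
  letter by letter through these spaces shows that the cumulant of the letters of a word
  vanishes unless the word starts and ends with the same letter, and that for a word \<open>T v T\<close>
  it equals \<open>\<Sum>\<^sub>k \<beta>\<^sub>k\<^sub>+\<^sub>2(T, \<dots>, T) (C\<^sup>k H\<^sub>\<not>\<^sub>T)(v)\<close>. Here \<open>E\<^sub>L\<close> is the series of \<open>\<psi>\<close>-cumulants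
  of the words from \<open>L\<close> to \<open>L\<close>, \<open>H\<^sub>L = (1 - E\<^sub>L)\<^sup>-\<^sup>1\<close> and \<open>C = H\<^sub>\<not>\<^sub>T T\<close>. With the
  moment-cumulant relation the first fact gives \<open>\<beta>\<^sup>b\<^sub>L = H\<^sub>L\<close>; the second is the \<open>\<eta>\<close>-equation.
\<close>

section \<open>The algebra of word series\<close>

definition pmon :: "bool list \<Rightarrow> ncpoly" where
  "pmon u = (\<lambda>w. if w = u then 1 else 0)"

definition finsupp :: "ncpoly \<Rightarrow> bool" where
  "finsupp p \<longleftrightarrow> finite (supp p)"

lemma pmul_Nil [simp]: "pmul p q [] = p [] * q []"
  by (simp add: pmul_def)

lemma pmul_Cons: "pmul p q (c # w) = p [] * q (c # w) + pmul (\<lambda>u. p (c # u)) q w"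
  unfolding pmul_def by (simp only: length_Cons sum.atMost_Suc_shift) simp

lemma pmul_split_Nil: "pmul f g w = f [] * g w + (\<Sum>j\<in>{1..length w}. f (take j w) * g (drop j w))"
  unfolding pmul_def by (simp add: sum.atMost_shift sum.atLeast1_atMost_eq)

lemma pmul_sum_right: "pmul r (\<lambda>w. \<Sum>j\<in>J. f j w) w = (\<Sum>j\<in>J. pmul r (f j) w)"
  unfolding pmul_def by (simp add: sum_distrib_left sum.swap[of _ J])

lemma pmul_scale_right: "pmul r (\<lambda>w. a * f w) w = a * pmul r f w"
  unfolding pmul_def by (simp add: sum_distrib_left algebra_simps)

lemma pmul_scale_left: "pmul (\<lambda>w. a * f w) r w = a * pmul f r w"
  unfolding pmul_def by (simp add: sum_distrib_left algebra_simps)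

lemma pmul_add_right: "pmul r (\<lambda>w. f w + g w) w = pmul r f w + pmul r g w"
  unfolding pmul_def by (simp add: sum.distrib algebra_simps)

lemma pmul_add_left: "pmul (\<lambda>w. f w + g w) r w = pmul f r w + pmul g r w"
  unfolding pmul_def by (simp add: sum.distrib algebra_simps)

lemma pmul_diff_left: "pmul (\<lambda>w. f w - g w) r w = pmul f r w - pmul g r w"
  unfolding pmul_def by (simp add: sum_subtractf algebra_simps)

lemma pmul_add_left_fun: "pmul (\<lambda>w. f w + g w) r = (\<lambda>w. pmul f r w + pmul g r w)"
  by (rule ext, rule pmul_add_left)

lemma pmul_add_right_fun: "pmul r (\<lambda>w. f w + g w) = (\<lambda>w. pmul r f w + pmul r g w)"
  by (rule ext, rule pmul_add_right)

lemma pmul_scale_left_fun: "pmul (\<lambda>w. a * f w) r = (\<lambda>w. a * pmul f r w)"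
  by (rule ext, rule pmul_scale_left)

lemma pmul_scale_right_fun: "pmul r (\<lambda>w. a * f w) = (\<lambda>w. a * pmul r f w)"
  by (rule ext, rule pmul_scale_right)

lemma pmul_zero_left [simp]: "pmul (\<lambda>_. 0) q = (\<lambda>_. 0)"
  by (auto simp: pmul_def)

lemma pmul_zero_right [simp]: "pmul q (\<lambda>_. 0) = (\<lambda>_. 0)"
  by (auto simp: pmul_def)

lemma pmul_assoc: "pmul (pmul p q) r = pmul p (pmul q r)"
proof
  fix w show "pmul (pmul p q) r w = pmul p (pmul q r) w"
  proof (induction w arbitrary: p)
    case Nil then show ?case by simp
  next
    case (Cons c w)
    have "(\<lambda>u. pmul p q (c # u)) = (\<lambda>u. p [] * q (c # u) + pmul (\<lambda>u. p (c # u)) q u)"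
      by (simp add: pmul_Cons)
    then show ?case
      by (simp add: pmul_Cons pmul_add_left pmul_scale_left Cons.IH algebra_simps)
  qed
qed

lemma pmul_pone_left [simp]: "pmul pone q = q"
proof
  fix w show "pmul pone q w = q w"
    unfolding pmul_def pone_def by (subst sum.remove[of _ 0]) (auto intro!: sum.neutral)
qed

lemma pmul_pone_right [simp]: "pmul p pone = p"
proof
  fix w show "pmul p pone w = p w"
    unfolding pmul_def pone_def by (subst sum.remove[of _ "length w"]) (auto intro!: sum.neutral)
qed

lemma pone_eq_pmon: "pone = pmon []"
  by (auto simp: pone_def pmon_def)

lemma pmul_pmon: "pmul (pmon u) q w = (if take (length u) w = u then q (drop (length u) w) else 0)"
proof (induction u arbitrary: w)
  case Nil then show ?case by (simp add: pone_eq_pmon[symmetric])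
next
  case (Cons c u)
  show ?case
  proof (cases w)
    case Nil then show ?thesis by (simp add: pmon_def)
  next
    case (Cons d w')
    have "(\<lambda>x. pmon (c # u) (d # x)) = (\<lambda>x. if d = c then pmon u x else 0)"
      by (auto simp: pmon_def)
    then have "pmul (pmon (c # u)) q w = (if d = c then pmul (pmon u) q w' else 0)"
      unfolding Cons pmul_Cons by (simp add: pmon_def)
    then show ?thesis using Cons.IH[of w'] Cons by auto
  qed
qed

lemma pmul_pmon_letter_Cons: "pmul (pmon [c]) q (d # w) = (if d = c then q w else 0)"
  by (simp add: pmul_pmon)

lemma pmul_pmon_pmon: "pmul (pmon u) (pmon v) = pmon (u @ v)"
proof
  fix w show "pmul (pmon u) (pmon v) w = pmon (u @ v) w"
    unfolding pmul_pmon using append_eq_conv_conj[of u v w] by (auto simp: pmon_def)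
qed

lemma pmul_pmon_letter_right:
  "pmul q (pmon [T]) w = (if w \<noteq> [] \<and> last w = T then q (butlast w) else 0)"
proof (induction w arbitrary: q)
  case Nil then show ?case by (simp add: pmon_def)
next
  case (Cons c w)
  then show ?case by (cases "w = []") (simp_all add: pmul_Cons pmon_def)
qed

lemma supp_pmul_subset: "supp (pmul p q) \<subseteq> (\<lambda>(u, v). u @ v) ` (supp p \<times> supp q)"
proof
  fix w assume "w \<in> supp (pmul p q)"
  then have "(\<Sum>k\<le>length w. p (take k w) * q (drop k w)) \<noteq> 0" by (simp add: supp_def pmul_def)
  then obtain k where "p (take k w) * q (drop k w) \<noteq> 0" by (meson sum.neutral)
  then show "w \<in> (\<lambda>(u, v). u @ v) ` (supp p \<times> supp q)"
    unfolding supp_def image_iff by (intro bexI[of _ "(take k w, drop k w)"]) auto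
qed

lemma finsupp_pmul: "finsupp p \<Longrightarrow> finsupp q \<Longrightarrow> finsupp (pmul p q)"
  unfolding finsupp_def by (rule finite_subset[OF supp_pmul_subset]) auto

lemma finsupp_pmon [simp]: "finsupp (pmon u)"
  by (simp add: finsupp_def supp_def pmon_def)

lemma finsupp_pone [simp]: "finsupp pone"
  by (simp add: finsupp_def supp_def pone_def)

lemma finsupp_zero [simp]: "finsupp (\<lambda>_. 0)"
  by (simp add: finsupp_def supp_def)

lemma finsupp_add: "finsupp p \<Longrightarrow> finsupp q \<Longrightarrow> finsupp (\<lambda>w. p w + q w)"
  unfolding finsupp_def supp_def by (rule finite_subset[of _ "{w. p w \<noteq> 0} \<union> {w. q w \<noteq> 0}"]) auto

lemma finsupp_diff: "finsupp p \<Longrightarrow> finsupp q \<Longrightarrow> finsupp (\<lambda>w. p w - q w)"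
  unfolding finsupp_def supp_def by (rule finite_subset[of _ "{w. p w \<noteq> 0} \<union> {w. q w \<noteq> 0}"]) auto

lemma finsupp_scale: "finsupp p \<Longrightarrow> finsupp (\<lambda>w. a * p w)"
  unfolding finsupp_def supp_def by (rule finite_subset[of _ "{w. p w \<noteq> 0}"]) auto

lemma finsupp_sum: "finite J \<Longrightarrow> (\<And>j. j \<in> J \<Longrightarrow> finsupp (f j)) \<Longrightarrow> finsupp (\<lambda>w. \<Sum>j\<in>J. f j w)"
  by (induction J rule: finite_induct) (simp_all add: finsupp_add)

lemma pprod_Nil [simp]: "pprod [] = pone"
  by (simp add: pprod_def)

lemma pprod_Cons [simp]: "pprod (a # us) = pmul a (pprod us)"
  by (simp add: pprod_def)

lemma pprod_append: "pprod (us @ vs) = pmul (pprod us) (pprod vs)"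
  by (induction us) (simp_all add: pmul_assoc)

lemma finsupp_pprod: "(\<And>u. u \<in> set us \<Longrightarrow> finsupp u) \<Longrightarrow> finsupp (pprod us)"
  by (induction us) (simp_all add: finsupp_pmul)

section \<open>Linear functionals and centering\<close>

lemma lin_superset: "finite S \<Longrightarrow> supp p \<subseteq> S \<Longrightarrow> lin \<theta> p = (\<Sum>w\<in>S. p w * \<theta> w)"
  unfolding lin_def by (rule sum.mono_neutral_left) (auto simp: supp_def)

lemma lin_add:
  assumes "finsupp p" "finsupp q"
  shows "lin \<theta> (\<lambda>w. p w + q w) = lin \<theta> p + lin \<theta> q"
proof -
  let ?S = "supp p \<union> supp q"
  have fin: "finite ?S" using assms by (simp add: finsupp_def)
  have "lin \<theta> (\<lambda>w. p w + q w) = (\<Sum>w\<in>?S. (p w + q w) * \<theta> w)"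
    by (rule lin_superset[OF fin]) (auto simp: supp_def)
  also have "\<dots> = (\<Sum>w\<in>?S. p w * \<theta> w) + (\<Sum>w\<in>?S. q w * \<theta> w)"
    by (simp add: algebra_simps sum.distrib)
  also have "\<dots> = lin \<theta> p + lin \<theta> q"
    using lin_superset[OF fin, of p \<theta>] lin_superset[OF fin, of q \<theta>] by auto
  finally show ?thesis .
qed

lemma lin_scale: "lin \<theta> (\<lambda>w. a * p w) = a * lin \<theta> p"
proof (cases "a = 0")
  case True then show ?thesis by (simp add: lin_def supp_def)
next
  case False
  then have "supp (\<lambda>w. a * p w) = supp p" by (auto simp: supp_def)
  then show ?thesis by (simp add: lin_def sum_distrib_left algebra_simps)
qed

lemma lin_diff: "finsupp p \<Longrightarrow> finsupp q \<Longrightarrow> lin \<theta> (\<lambda>w. p w - q w) = lin \<theta> p - lin \<theta> q"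
  using lin_add[of p "\<lambda>w. (-1) * q w" \<theta>] lin_scale[of \<theta> "-1" q] finsupp_scale[of q "-1"] by simp

lemma lin_sum:
  "finite J \<Longrightarrow> (\<And>j. j \<in> J \<Longrightarrow> finsupp (f j)) \<Longrightarrow> lin \<theta> (\<lambda>w. \<Sum>j\<in>J. f j w) = (\<Sum>j\<in>J. lin \<theta> (f j))"
proof (induction J rule: finite_induct)
  case empty then show ?case by (simp add: lin_def supp_def)
next
  case (insert x F)
  then show ?case using lin_add[of "f x" "\<lambda>w. \<Sum>j\<in>F. f j w" \<theta>] finsupp_sum[of F f] by simp
qed

lemma lin_pmon [simp]: "lin \<theta> (pmon u) = \<theta> u"
proof -
  have "supp (pmon u) = {u}" by (auto simp: supp_def pmon_def)
  then show ?thesis by (simp add: lin_def pmon_def)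
qed

lemma lin_pone: "unital \<theta> \<Longrightarrow> lin \<theta> pone = 1"
  by (simp add: pone_eq_pmon unital_def)

lemma lin_zero [simp]: "lin \<theta> (\<lambda>_. 0) = 0"
  by (simp add: lin_def supp_def)

definition center :: "(bool list \<Rightarrow> complex) \<Rightarrow> ncpoly \<Rightarrow> ncpoly" where
  "center \<theta> p = (\<lambda>w. p w - lin \<theta> p * pone w)"

lemma center_decomp: "p w = center \<theta> p w + lin \<theta> p * pone w"
  by (simp add: center_def)

lemma finsupp_center: "finsupp p \<Longrightarrow> finsupp (center \<theta> p)"
  unfolding center_def by (intro finsupp_diff finsupp_scale) simp_all

lemma lin_center: "unital \<theta> \<Longrightarrow> finsupp p \<Longrightarrow> lin \<theta> (center \<theta> p) = 0"
  unfolding center_def by (subst lin_diff) (simp_all add: finsupp_scale lin_scale lin_pone)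

lemma center_eq_self: "lin \<theta> p = 0 \<Longrightarrow> center \<theta> p = p"
  by (simp add: center_def)

lemma center_add:
  "finsupp p \<Longrightarrow> finsupp q \<Longrightarrow> center \<theta> (\<lambda>w. p w + q w) = (\<lambda>w. center \<theta> p w + center \<theta> q w)"
  by (auto simp: center_def lin_add algebra_simps)

lemma center_scale: "center \<theta> (\<lambda>w. a * p w) = (\<lambda>w. a * center \<theta> p w)"
  by (auto simp: center_def lin_scale algebra_simps)

lemma center_sum: "finite J \<Longrightarrow> (\<And>j. j \<in> J \<Longrightarrow> finsupp (f j)) \<Longrightarrow>
   center \<theta> (\<lambda>w. \<Sum>j\<in>J. f j w) = (\<lambda>w. \<Sum>j\<in>J. center \<theta> (f j) w)"
  by (auto simp: center_def lin_sum algebra_simps sum_subtractf sum_distrib_right sum_distrib_left)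

lemma pmul_center_decomp: "pmul a q = (\<lambda>w. pmul (center \<psi> a) q w + lin \<psi> a * q w)"
proof -
  have "a = (\<lambda>w. center \<psi> a w + lin \<psi> a * pone w)" by (rule ext, rule center_decomp)
  then have "pmul a q = pmul (\<lambda>w. center \<psi> a w + lin \<psi> a * pone w) q" by simp
  also have "\<dots> = (\<lambda>w. pmul (center \<psi> a) q w + lin \<psi> a * q w)"
    by (simp add: pmul_add_left_fun pmul_scale_left_fun)
  finally show ?thesis .
qed

section \<open>Alternating centred products and c-freeness\<close>

lemma in_alg_finsupp: "in_alg b p \<Longrightarrow> finsupp p"
  by (simp add: in_alg_def finsupp_def)

lemma in_alg_pmon_letter [simp]: "in_alg b (pmon [b])"
  by (auto simp: in_alg_def supp_def pmon_def)

lemma in_alg_subset: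
  assumes "in_alg b p" "in_alg b q" "supp r \<subseteq> supp p \<union> supp q"
  shows "in_alg b r"
proof -
  have "finite (supp r)" using assms by (meson finite_Un finite_subset in_alg_def)
  moreover have "\<forall>w\<in>supp r. \<forall>c\<in>set w. c = b" using assms unfolding in_alg_def by blast
  ultimately show ?thesis by (simp add: in_alg_def)
qed

lemma in_alg_add: "in_alg b p \<Longrightarrow> in_alg b q \<Longrightarrow> in_alg b (\<lambda>w. p w + q w)"
  by (erule in_alg_subset, assumption) (auto simp: supp_def)

lemma in_alg_diff: "in_alg b p \<Longrightarrow> in_alg b q \<Longrightarrow> in_alg b (\<lambda>w. p w - q w)"
  by (erule in_alg_subset, assumption) (auto simp: supp_def)

lemma in_alg_scale: "in_alg b p \<Longrightarrow> in_alg b (\<lambda>w. a * p w)"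
  by (rule in_alg_subset[of b p p]) (auto simp: supp_def)

lemma in_alg_zero [simp]: "in_alg b (\<lambda>_. 0)"
  by (simp add: in_alg_def supp_def)

lemma in_alg_sum: "finite J \<Longrightarrow> (\<And>j. j \<in> J \<Longrightarrow> in_alg b (f j)) \<Longrightarrow> in_alg b (\<lambda>w. \<Sum>j\<in>J. f j w)"
  by (induction J rule: finite_induct) (simp_all add: in_alg_add)

lemma in_alg_center: "in_alg b p \<Longrightarrow> in_alg b (center \<theta> p)"
  unfolding center_def by (intro in_alg_diff in_alg_scale) (auto simp: in_alg_def supp_def pone_def)

lemma in_alg_pmul:
  assumes "in_alg b p" "in_alg b q"
  shows "in_alg b (pmul p q)"
proof -
  have "\<forall>c\<in>set w. c = b" if w: "w \<in> supp (pmul p q)" for w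
  proof -
    obtain u v where "u \<in> supp p" "v \<in> supp q" "w = u @ v"
      using w supp_pmul_subset[of p q] by fastforce
    then show ?thesis using assms by (auto simp: in_alg_def)
  qed
  moreover have "finsupp (pmul p q)" using assms by (simp add: finsupp_pmul in_alg_finsupp)
  ultimately show ?thesis by (simp add: in_alg_def finsupp_def)
qed

definition alternating :: "bool \<Rightarrow> ncpoly list \<Rightarrow> bool" where
  "alternating b us \<longleftrightarrow> (\<forall>j<length us. in_alg (if even j then b else \<not> b) (us ! j))"

lemma alternating_Nil [simp]: "alternating b []"
  by (simp add: alternating_def)

lemma alternating_Cons: "alternating b (a # us) \<longleftrightarrow> in_alg b a \<and> alternating (\<not> b) us"
  unfolding alternating_def by (simp add: All_less_Suc2 if_distrib cong: if_cong) blast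

lemma alternating_snoc:
  "alternating b (us @ [x]) \<longleftrightarrow> alternating b us \<and> in_alg (if even (length us) then b else \<not> b) x"
  unfolding alternating_def by (simp add: nth_append All_less_Suc) blast

lemma alternating_finsupp: "alternating b us \<Longrightarrow> u \<in> set us \<Longrightarrow> finsupp u"
  unfolding alternating_def by (metis in_set_conv_nth in_alg_finsupp)

lemma c_free_psi_prod:
  "c_free \<phi> \<psi> \<Longrightarrow> us \<noteq> [] \<Longrightarrow> alternating b us \<Longrightarrow> \<forall>u\<in>set us. lin \<psi> u = 0 \<Longrightarrow>
   lin \<psi> (pprod us) = 0"
  unfolding c_free_def alternating_def by (metis nth_mem)

lemma c_free_phi_prod:
  "c_free \<phi> \<psi> \<Longrightarrow> us \<noteq> [] \<Longrightarrow> alternating b us \<Longrightarrow> \<forall>u\<in>set us. lin \<psi> u = 0 \<Longrightarrow>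
   lin \<phi> (pprod us) = (\<Prod>j<length us. lin \<phi> (us ! j))"
  unfolding c_free_def alternating_def by (metis nth_mem)

text \<open>\<open>alt_span \<psi> E\<close> is the space \<open>V\<^sub>E\<close>; the parity condition says that the last factor lies
  in \<open>\<complex>\<langle>E\<rangle>\<close>.\<close>

inductive alt_span :: "(bool list \<Rightarrow> complex) \<Rightarrow> bool \<Rightarrow> ncpoly \<Rightarrow> bool" for \<psi> E where
  gen: "us \<noteq> [] \<Longrightarrow> alternating b us \<Longrightarrow> (if even (length us - 1) then b else \<not> b) = E \<Longrightarrow>
        \<forall>u\<in>set us. lin \<psi> u = 0 \<Longrightarrow> alt_span \<psi> E (pprod us)"
| zero: "alt_span \<psi> E (\<lambda>_. 0)"
| add: "alt_span \<psi> E p \<Longrightarrow> alt_span \<psi> E q \<Longrightarrow> alt_span \<psi> E (\<lambda>w. p w + q w)"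
| scale: "alt_span \<psi> E p \<Longrightarrow> alt_span \<psi> E (\<lambda>w. a * p w)"

lemma alt_span_finsupp: "alt_span \<psi> E p \<Longrightarrow> finsupp p"
  by (induction rule: alt_span.induct)
    (auto intro: finsupp_pprod alternating_finsupp finsupp_add finsupp_scale)

lemma alt_span_psi_zero:
  assumes "c_free \<phi> \<psi>" and "alt_span \<psi> E p"
  shows "lin \<psi> p = 0"
  using assms(2)
proof (induction rule: alt_span.induct)
  case (gen us b) then show ?case using c_free_psi_prod assms(1) by blast
next
  case (add p q) then show ?case by (simp add: lin_add alt_span_finsupp)
qed (simp_all add: lin_scale)

lemma alt_span_mult_other:
  assumes cf: "c_free \<phi> \<psi>" and u\<phi>: "unital \<phi>" and u\<psi>: "unital \<psi>"
    and x: "in_alg (\<not> E) x" and "alt_span \<psi> E p"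
  shows "lin \<phi> (pmul p x) = lin \<phi> p * lin \<phi> x \<and> lin \<psi> (pmul p x) = 0"
  using assms(5)
proof (induction rule: alt_span.induct)
  case (gen us b)
  let ?x0 = "center \<psi> x"
  have fx: "finsupp x" using x in_alg_finsupp by blast
  have fus: "finsupp (pprod us)" using gen alternating_finsupp finsupp_pprod by blast
  have split: "pmul (pprod us) x = (\<lambda>w. pprod (us @ [?x0]) w + lin \<psi> x * pprod us w)"
  proof
    fix w
    have "pmul (pprod us) x w = pmul (pprod us) (\<lambda>w. ?x0 w + lin \<psi> x * pone w) w"
      by (metis center_decomp)
    then show "pmul (pprod us) x w = pprod (us @ [?x0]) w + lin \<psi> x * pprod us w"
      by (simp add: pmul_add_right pmul_scale_right pprod_append)
  qed
  obtain m where m: "length us = Suc m" using gen(1) by (cases us) auto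
  have "(if even (length us) then b else \<not> b) = (\<not> E)"
    using gen(3) unfolding m by (cases "even m") auto
  then have alt: "alternating b (us @ [?x0])"
    using gen x by (simp add: alternating_snoc in_alg_center)
  have cen: "\<forall>u\<in>set (us @ [?x0]). lin \<psi> u = 0" using gen lin_center[OF u\<psi> fx] by auto
  have fin: "finsupp (pprod (us @ [?x0]))" using alt alternating_finsupp finsupp_pprod by blast
  have "lin \<psi> (pprod (us @ [?x0])) = 0" "lin \<psi> (pprod us) = 0"
    using c_free_psi_prod[OF cf _ alt cen] c_free_psi_prod[OF cf gen(1,2)] gen(4) by simp_all
  moreover have "lin \<phi> (pprod (us @ [?x0])) = (\<Prod>j<length us. lin \<phi> (us ! j)) * lin \<phi> ?x0"
    using c_free_phi_prod[OF cf _ alt cen] by (simp add: nth_append)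
  moreover have "lin \<phi> (pprod us) = (\<Prod>j<length us. lin \<phi> (us ! j))"
    using c_free_phi_prod[OF cf gen(1,2)] gen(4) by simp
  moreover have "lin \<phi> ?x0 = lin \<phi> x - lin \<psi> x"
    unfolding center_def using fx by (simp add: lin_diff finsupp_scale lin_scale lin_pone[OF u\<phi>])
  ultimately show ?case
    unfolding split using fin fus by (simp add: lin_add finsupp_scale lin_scale algebra_simps)
next
  case (add p q)
  have "finsupp (pmul p x)" "finsupp (pmul q x)"
    using add alt_span_finsupp finsupp_pmul x in_alg_finsupp by blast+
  then show ?case using add alt_span_finsupp by (simp add: pmul_add_left_fun lin_add algebra_simps)
qed (simp_all add: pmul_scale_left_fun lin_scale)
lemma alt_span_gen_Cons:
  assumes "us \<noteq> []" "alternating b us" "(if even (length us - 1) then b else \<not> b) = E"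
    "\<forall>u\<in>set us. lin \<psi> u = 0" and "in_alg (\<not> b) x" "lin \<psi> x = 0"
  shows "alt_span \<psi> E (pprod (x # us))"
proof (rule alt_span.gen[where b="\<not> b"])
  obtain m where "length us = Suc m" using assms(1) by (cases us) auto
  then show "(if even (length (x # us) - 1) then \<not> b else \<not> \<not> b) = E"
    using assms(3) by (cases "even m") auto
qed (use assms in \<open>auto simp: alternating_Cons\<close>)

text \<open>Left multiplication of a generator of \<open>V\<^sub>E\<close> by \<open>a \<in> \<complex>\<langle>c\<rangle>\<close>: write \<open>a = Q a + \<psi>(a)\<close>
  if \<open>a\<close> and the first factor \<open>u\<close> lie in different algebras, and \<open>a u = Q(a u) + \<psi>(a u)\<close>
  otherwise; only a single factor from \<open>\<complex>\<langle>E\<rangle>\<close> cannot be absorbed.\<close>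

lemma alt_span_prod_left_mult:
  assumes u\<psi>: "unital \<psi>"
    and g: "us \<noteq> []" "alternating b us" "(if even (length us - 1) then b else \<not> b) = E"
      "\<forall>u\<in>set us. lin \<psi> u = 0"
    and a: "in_alg c a" and not_single: "\<not> (c = E \<and> length us = 1)"
  shows "alt_span \<psi> E (pmul a (pprod us))"
proof -
  obtain u us' where us: "us = u # us'" using g(1) by (cases us) auto
  have fa: "finsupp a" using a in_alg_finsupp by blast
  show ?thesis
  proof (cases "c = b")
    case False
    then have "in_alg (\<not> b) (center \<psi> a)" using a by (cases c) (auto simp: in_alg_center)
    then have "alt_span \<psi> E (pprod (center \<psi> a # us))"
      using alt_span_gen_Cons[OF g] lin_center[OF u\<psi> fa] by blast
    moreover have "alt_span \<psi> E (pprod us)" using alt_span.gen[OF g] .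
    ultimately show ?thesis
      by (subst pmul_center_decomp[of _ _ \<psi>]) (auto intro: alt_span.add alt_span.scale)
  next
    case True
    have "us' \<noteq> []" using g(3) us not_single True by auto
    have u: "in_alg b u" "alternating (\<not> b) us'" using g(2) us by (auto simp: alternating_Cons)
    have parity: "(if even (length us' - 1) then \<not> b else \<not> \<not> b) = E"
      using g(3) us \<open>us' \<noteq> []\<close> by (cases "length us'") auto
    have cen: "\<forall>v\<in>set us'. lin \<psi> v = 0" using g(4) us by simp
    have "in_alg (\<not> \<not> b) (center \<psi> (pmul a u))"
      using a True u(1) by (simp add: in_alg_center in_alg_pmul)
    then have "alt_span \<psi> E (pprod (center \<psi> (pmul a u) # us'))"
      using alt_span_gen_Cons[OF \<open>us' \<noteq> []\<close> u(2) parity cen]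
        lin_center[OF u\<psi> finsupp_pmul[OF fa in_alg_finsupp[OF u(1)]]] by blast
    moreover have "alt_span \<psi> E (pprod us')" using alt_span.gen[OF \<open>us' \<noteq> []\<close> u(2) parity cen] .
    moreover have "pmul a (pprod us) = pmul (pmul a u) (pprod us')"
      by (simp add: us pmul_assoc)
    ultimately show ?thesis
      by (simp only:) (subst pmul_center_decomp[of _ _ \<psi>], auto intro: alt_span.add alt_span.scale)
  qed
qed

lemma alt_span_left_mult_other:
  assumes "unital \<psi>" and a: "in_alg (\<not> E) a" and "alt_span \<psi> E p"
  shows "alt_span \<psi> E (pmul a p)"
  using assms(3)
proof (induction rule: alt_span.induct)
  case (gen us b) then show ?case using alt_span_prod_left_mult[OF assms(1) gen(1-4) a] by simp
next
  case (add p q) then show ?case by (simp add: pmul_add_right_fun alt_span.add)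
next
  case (scale p c) then show ?case by (simp add: pmul_scale_right_fun alt_span.scale)
qed (simp add: alt_span.zero)

lemma alt_span_center:
  assumes "unital \<psi>" and x: "in_alg E x"
  shows "alt_span \<psi> E (center \<psi> x)"
proof -
  have "alt_span \<psi> E (pprod [center \<psi> x])"
    by (rule alt_span.gen[where b=E])
      (use x lin_center[OF assms(1) in_alg_finsupp[OF x]] in \<open>auto simp: alternating_Cons in_alg_center\<close>)
  then show ?thesis by simp
qed

lemma alt_span_center_left_mult_same:
  assumes cf: "c_free \<phi> \<psi>" and u\<psi>: "unital \<psi>" and a: "in_alg E a" and "alt_span \<psi> E p"
  shows "alt_span \<psi> E (center \<psi> (pmul a p))"
  using assms(4)
proof (induction rule: alt_span.induct)
  case (gen us b)
  show ?case
  proof (cases "length us = 1")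
    case True
    then obtain u where us: "us = [u]" by (cases us) (auto simp: length_Suc_conv)
    then have "in_alg E u" using gen(2,3) by (simp add: alternating_Cons)
    then show ?thesis using us alt_span_center[OF u\<psi>] in_alg_pmul[OF a] by simp
  next
    case False
    have "alt_span \<psi> E (pmul a (pprod us))"
      using alt_span_prod_left_mult[OF u\<psi> gen(1-4) a] False by simp
    then show ?thesis using alt_span_psi_zero[OF cf] center_eq_self by metis
  qed
next
  case zero
  have "center \<psi> (pmul a (\<lambda>_. 0)) = (\<lambda>_. 0)" by (simp add: center_def)
  then show ?case by (simp add: alt_span.zero)
next
  case (add p q)
  have "finsupp (pmul a p)" "finsupp (pmul a q)"
    using add(1,2) alt_span_finsupp finsupp_pmul in_alg_finsupp[OF a] by blast+
  then show ?case using add by (simp add: pmul_add_right_fun center_add alt_span.add)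
next
  case (scale p c) then show ?case by (simp add: pmul_scale_right_fun center_scale alt_span.scale)
qed

section \<open>Boolean cumulants as nested centerings\<close>

fun nest :: "(bool list \<Rightarrow> complex) \<Rightarrow> bool list list \<Rightarrow> ncpoly" where
  "nest \<theta> [] = pone"
| "nest \<theta> [a] = pmon a"
| "nest \<theta> (a # b # as) = pmul (pmon a) (center \<theta> (nest \<theta> (b # as)))"

lemma finsupp_nest: "finsupp (nest \<theta> as)"
  by (induction \<theta> as rule: nest.induct) (simp_all add: finsupp_pmul finsupp_center)

lemma nest_Cons: "bs \<noteq> [] \<Longrightarrow> nest \<theta> (a # bs) = pmul (pmon a) (center \<theta> (nest \<theta> bs))"
  by (cases bs) auto

lemma pmul_pmon_nest:
  assumes "bs \<noteq> []"
  shows "pmul (pmon a) (nest \<theta> bs) w = nest \<theta> (a # bs) w + lin \<theta> (nest \<theta> bs) * pmon a w"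
proof -
  have "pmul (pmon a) (nest \<theta> bs) w
      = pmul (pmon a) (\<lambda>w. center \<theta> (nest \<theta> bs) w + lin \<theta> (nest \<theta> bs) * pone w) w"
    by (metis center_decomp)
  then show ?thesis using nest_Cons[OF assms] by (simp add: pmul_add_right pmul_scale_right)
qed

lemma sum_atLeast1_atMost_Suc: "(\<Sum>j\<in>{1..Suc n}. f j) = f 1 + (\<Sum>j\<in>{1..n}. f (Suc j))"
proof -
  have "(\<Sum>j\<in>{1..Suc n}. f j) = f 1 + (\<Sum>j\<in>{Suc 1..Suc n}. f j)"
    by (rule sum.atLeast_Suc_atMost) simp
  then show ?thesis by (simp only: sum.shift_bounds_cl_Suc_ivl)
qed

lemma pmon_concat_eq_sum_nest:
  assumes u: "unital \<theta>" and "as \<noteq> []"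
  shows "pmon (concat as) w = (\<Sum>j\<in>{1..length as}. \<theta> (concat (drop j as)) * nest \<theta> (take j as) w)"
  using assms(2)
proof (induction as arbitrary: w)
  case Nil then show ?case by simp
next
  case (Cons a as)
  show ?case
  proof (cases "as = []")
    case True then show ?thesis using u by (simp add: unital_def)
  next
    case False
    let ?n = "length as"
    have IH: "pmon (concat as) = (\<lambda>w. \<Sum>j\<in>{1..?n}. \<theta> (concat (drop j as)) * nest \<theta> (take j as) w)"
      using Cons.IH[OF False] by (rule ext)
    have "\<theta> (concat as) = lin \<theta> (pmon (concat as))" by simp
    also have "\<dots> = (\<Sum>j\<in>{1..?n}. \<theta> (concat (drop j as)) * lin \<theta> (nest \<theta> (take j as)))"
      unfolding IH by (subst lin_sum) (auto intro: finsupp_scale finsupp_nest simp: lin_scale)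
    finally have moment: "\<theta> (concat as) = \<dots>" .
    have "pmon (concat (a # as)) w = pmul (pmon a) (pmon (concat as)) w"
      by (simp add: pmul_pmon_pmon)
    also have "\<dots> = (\<Sum>j\<in>{1..?n}. \<theta> (concat (drop j as)) * pmul (pmon a) (nest \<theta> (take j as)) w)"
      unfolding IH by (simp add: pmul_sum_right pmul_scale_right)
    also have "\<dots> = (\<Sum>j\<in>{1..?n}. \<theta> (concat (drop j as)) * nest \<theta> (a # take j as) w)
        + \<theta> (concat as) * pmon a w"
      using False by (simp add: moment pmul_pmon_nest algebra_simps sum.distrib sum_distrib_left)
    finally show ?thesis
      unfolding length_Cons sum_atLeast1_atMost_Suc by (simp add: add.commute)
  qed
qed

text \<open>Applying \<open>\<theta>\<close> to the expansion gives the defining recursion of Boolean cumulants.\<close>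

lemma bcum_eq_lin_nest:
  assumes u: "unital \<theta>" and "as \<noteq> []"
  shows "bcum \<theta> as = lin \<theta> (nest \<theta> as)"
  using assms(2)
proof (induction "length as" arbitrary: as rule: less_induct)
  case less
  let ?n = "length as"
  have expansion:
    "pmon (concat as) = (\<lambda>w. \<Sum>j\<in>{1..?n}. \<theta> (concat (drop j as)) * nest \<theta> (take j as) w)"
    using pmon_concat_eq_sum_nest[OF u less.prems] by (rule ext)
  have "\<theta> (concat as) = lin \<theta> (\<lambda>w. \<Sum>j\<in>{1..?n}. \<theta> (concat (drop j as)) * nest \<theta> (take j as) w)"
    unfolding expansion[symmetric] by simp
  also have "\<dots> = (\<Sum>j\<in>{1..?n}. \<theta> (concat (drop j as)) * lin \<theta> (nest \<theta> (take j as)))"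
    by (subst lin_sum) (auto intro: finsupp_scale finsupp_nest simp: lin_scale)
  also have "\<dots> = (\<Sum>j\<in>{1..<?n}. \<theta> (concat (drop j as)) * lin \<theta> (nest \<theta> (take j as)))
      + lin \<theta> (nest \<theta> as)"
  proof -
    have "{1..?n} = insert ?n {1..<?n}" using less.prems by (cases as) auto
    then show ?thesis using u by (simp add: unital_def add.commute)
  qed
  also have "(\<Sum>j\<in>{1..<?n}. \<theta> (concat (drop j as)) * lin \<theta> (nest \<theta> (take j as)))
      = (\<Sum>k\<in>{1..<?n}. bcum \<theta> (take k as) * \<theta> (concat (drop k as)))"
  proof (rule sum.cong[OF refl])
    fix k assume "k \<in> {1..<?n}"
    then have "take k as \<noteq> []" "length (take k as) < ?n" using less.prems by auto
    then show "\<theta> (concat (drop k as)) * lin \<theta> (nest \<theta> (take k as))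
        = bcum \<theta> (take k as) * \<theta> (concat (drop k as))"
      using less.hyps by simp
  qed
  finally show ?case using less.prems by (subst bcum.simps) simp
qed

definition letters :: "bool list \<Rightarrow> bool list list" where
  "letters w = map (\<lambda>c. [c]) w"

definition nest_letters :: "(bool list \<Rightarrow> complex) \<Rightarrow> bool list \<Rightarrow> ncpoly" where
  "nest_letters \<theta> g = center \<theta> (nest \<theta> (letters g))"

lemma letters_simps [simp]:
  "letters [] = []" "letters (c # g) = [c] # letters g" "letters g = [] \<longleftrightarrow> g = []"
  by (auto simp: letters_def)

lemma nest_letters_single: "nest_letters \<theta> [c] = center \<theta> (pmon [c])"
  by (simp add: nest_letters_def)

lemma nest_letters_Cons:
  "g \<noteq> [] \<Longrightarrow> nest_letters \<theta> (c # g) = center \<theta> (pmul (pmon [c]) (nest_letters \<theta> g))"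
  by (simp add: nest_letters_def nest_Cons)

lemma finsupp_nest_letters: "finsupp (nest_letters \<theta> g)"
  by (simp add: nest_letters_def finsupp_center finsupp_nest)

lemma bcum_letters_Cons:
  "unital \<theta> \<Longrightarrow> g \<noteq> [] \<Longrightarrow> bcum \<theta> (letters (c # g)) = lin \<theta> (pmul (pmon [c]) (nest_letters \<theta> g))"
  by (simp add: bcum_eq_lin_nest nest_Cons nest_letters_def)

lemma bcum_letters_single: "bcum \<theta> (letters [c]) = \<theta> [c]"
  by (subst bcum.simps) simp

section \<open>Geometric series of word series\<close>

text \<open>\<open>geom e = (1 - e)\<^sup>-\<^sup>1 = \<Sum>\<^sub>k e\<^sup>k\<close>, meaningful when \<open>e\<close> has no constant term.\<close>

function geom :: "ncpoly \<Rightarrow> bool list \<Rightarrow> complex" where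
  "geom e w = (if w = [] then 1 else (\<Sum>j\<in>{1..length w}. e (take j w) * geom e (drop j w)))"
  by pat_completeness auto
termination by (relation "Wellfounded.measure (\<lambda>(e, w). length w)") auto

declare geom.simps [simp del]

lemma geom_Nil [simp]: "geom e [] = 1"
  by (subst geom.simps) simp

lemma geom_unfold: "e [] = 0 \<Longrightarrow> geom e w = pone w + pmul e (geom e) w"
  by (subst geom.simps) (auto simp: pmul_split_Nil pone_def)

lemma geom_right_inverse: "e [] = 0 \<Longrightarrow> pmul (\<lambda>w. pone w - e w) (geom e) = pone"
  by (rule ext) (simp add: pmul_diff_left geom_unfold)

lemma pmul_right_inverse_commute:
  assumes "pmul p g = pone" and "pmul g h = pone"
  shows "pmul g p = pone"
proof -
  have "p = pmul (pmul p g) h" using assms(2) by (simp add: pmul_assoc)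
  then show ?thesis using assms by simp
qed

text \<open>\<open>geom e\<close> has itself a right inverse, namely \<open>geom (1 - geom e)\<close>.\<close>

lemma geom_left_inverse:
  assumes "e [] = 0"
  shows "pmul (geom e) (\<lambda>w. pone w - e w) = pone"
proof -
  let ?e' = "\<lambda>w. pone w - geom e w"
  have "pmul (geom e) (geom ?e') = pone"
    using geom_right_inverse[of ?e'] by (simp add: pone_def)
  then show ?thesis using pmul_right_inverse_commute[OF geom_right_inverse[of e, OF assms]] by blast
qed

fun ppow :: "ncpoly \<Rightarrow> nat \<Rightarrow> ncpoly" where
  "ppow P 0 = pone"
| "ppow P (Suc k) = pmul P (ppow P k)"

lemma ppow_Suc_right: "ppow P (Suc k) = pmul (ppow P k) P"
  by (induction k) (simp_all flip: pmul_assoc)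

section \<open>The word series \<open>E\<^sub>L\<close>, \<open>H\<^sub>L\<close> and \<open>C\<close>\<close>

text \<open>\<open>delta_cum \<psi> L\<close> is \<open>\<beta>\<^sup>\<delta>\<^sup>,\<^sup>\<psi>\<^sub>L\<close> without its constant term; \<open>hseries \<psi> L\<close> will turn out to be
  \<open>\<beta>\<^sup>b\<^sup>,\<^sup>\<psi>\<^sub>L\<close>, and \<open>cseries \<psi> T\<close> is the word-series form of the argument \<open>z H A\<close> of \<open>\<eta>\<close>.\<close>

definition delta_cum :: "(bool list \<Rightarrow> complex) \<Rightarrow> bool \<Rightarrow> ncpoly" where
  "delta_cum \<psi> L w = (if w \<noteq> [] \<and> hd w = L \<and> last w = L then bcum \<psi> (letters w) else 0)"

definition hseries :: "(bool list \<Rightarrow> complex) \<Rightarrow> bool \<Rightarrow> ncpoly" where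
  "hseries \<psi> L = geom (delta_cum \<psi> L)"

definition cseries :: "(bool list \<Rightarrow> complex) \<Rightarrow> bool \<Rightarrow> ncpoly" where
  "cseries \<psi> T = pmul (hseries \<psi> (\<not> T)) (pmon [T])"

definition cpow_hseries :: "(bool list \<Rightarrow> complex) \<Rightarrow> bool \<Rightarrow> nat \<Rightarrow> ncpoly" where
  "cpow_hseries \<psi> T k = pmul (ppow (cseries \<psi> T) k) (hseries \<psi> (\<not> T))"

lemma delta_cum_Nil [simp]: "delta_cum \<psi> L [] = 0"
  by (simp add: delta_cum_def)

lemma hseries_Nil [simp]: "hseries \<psi> L [] = 1"
  by (simp add: hseries_def)

lemma hseries_unfold: "hseries \<psi> L w = pone w + pmul (delta_cum \<psi> L) (hseries \<psi> L) w"
  unfolding hseries_def by (rule geom_unfold) simp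

lemma hseries_support:
  "hseries \<psi> L u \<noteq> 0 \<Longrightarrow> u = [] \<or> (hd u = L \<and> last u = L)"
proof (induction "length u" arbitrary: u rule: less_induct)
  case less
  show ?case
  proof (cases "u = []")
    case False
    have "hseries \<psi> L u = (\<Sum>j\<in>{1..length u}. delta_cum \<psi> L (take j u) * hseries \<psi> L (drop j u))"
      using hseries_unfold[of \<psi> L u] False by (simp add: pmul_split_Nil pone_def)
    then obtain j where j: "j \<in> {1..length u}" "delta_cum \<psi> L (take j u) \<noteq> 0"
        "hseries \<psi> L (drop j u) \<noteq> 0"
      using less.prems by (metis (no_types, lifting) mult_eq_0_iff sum.neutral)
    have head: "take j u \<noteq> []" "hd (take j u) = L" "last (take j u) = L"
      using j(2) by (auto simp: delta_cum_def split: if_splits)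
    have "last u = L"
    proof (cases "drop j u = []")
      case True then show ?thesis using head by simp
    next
      case False
      then have "last (drop j u) = L" using less.hyps[of "drop j u"] j by auto
      then show ?thesis using False by (simp add: last_drop)
    qed
    moreover have "hd u = L" using head by (metis append_take_drop_id hd_append2)
    ultimately show ?thesis by simp
  qed simp
qed

lemma pmul_delta_cum_Cons:
  "pmul (delta_cum \<psi> L) f (c # u) = (\<Sum>j\<le>length u. delta_cum \<psi> L (c # take j u) * f (drop j u))"
  unfolding pmul_Cons by (simp add: pmul_def)

lemma pmul_delta_cum_other: "T \<noteq> L \<Longrightarrow> pmul (delta_cum \<psi> L) f (T # u) = 0"
  by (simp add: pmul_delta_cum_Cons delta_cum_def)

lemma cpow_hseries_0: "cpow_hseries \<psi> T 0 = hseries \<psi> (\<not> T)"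
  by (simp add: cpow_hseries_def)

lemma cpow_hseries_Suc:
  "cpow_hseries \<psi> T (Suc k) w = pmul (pmon [T]) (cpow_hseries \<psi> T k) w
     + pmul (delta_cum \<psi> (\<not> T)) (cpow_hseries \<psi> T (Suc k)) w"
proof -
  let ?H = "hseries \<psi> (\<not> T)" and ?E = "delta_cum \<psi> (\<not> T)"
  let ?R = "pmul (pmon [T]) (cpow_hseries \<psi> T k)"
  have H: "?H = (\<lambda>w. pone w + pmul ?E ?H w)" using hseries_unfold by (rule ext)
  have Suc: "cpow_hseries \<psi> T (Suc k) = pmul ?H ?R"
    by (simp add: cpow_hseries_def cseries_def pmul_assoc)
  have "pmul ?H ?R = (\<lambda>w. ?R w + pmul ?E (pmul ?H ?R) w)"
    by (subst H) (simp add: pmul_add_left_fun pmul_assoc)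
  then show ?thesis unfolding Suc by (rule fun_cong[where x=w, THEN trans]) simp
qed

lemma cpow_hseries_Nil: "cpow_hseries \<psi> T k [] = (if k = 0 then 1 else 0)"
proof (cases k)
  case 0 then show ?thesis by (simp add: cpow_hseries_0)
next
  case (Suc k') then show ?thesis using cpow_hseries_Suc[of \<psi> T k' "[]"] by (simp add: pmon_def)
qed

lemma cpow_hseries_Cons_same:
  "cpow_hseries \<psi> T k (T # u) = (if k = 0 then 0 else cpow_hseries \<psi> T (k - 1) u)"
proof (cases k)
  case 0 then show ?thesis
    using hseries_unfold[of \<psi> "\<not> T" "T # u"] pmul_delta_cum_other[of T "\<not> T"]
    by (simp add: cpow_hseries_0 pone_def)
next
  case (Suc k') then show ?thesis
    using cpow_hseries_Suc[of \<psi> T k' "T # u"] pmul_delta_cum_other[of T "\<not> T"]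
    by (simp add: pmul_pmon_letter_Cons)
qed

lemma cpow_hseries_Cons_other:
  "cpow_hseries \<psi> T k ((\<not> T) # u)
     = (\<Sum>j\<le>length u. delta_cum \<psi> (\<not> T) ((\<not> T) # take j u) * cpow_hseries \<psi> T k (drop j u))"
proof (cases k)
  case 0 then show ?thesis
    using hseries_unfold[of \<psi> "\<not> T" "(\<not> T) # u"] by (simp add: cpow_hseries_0 pone_def pmul_delta_cum_Cons)
next
  case (Suc k') then show ?thesis
    using cpow_hseries_Suc[of \<psi> T k' "(\<not> T) # u"] by (simp add: pmul_pmon_letter_Cons pmul_delta_cum_Cons)
qed

text \<open>Every factor \<open>C\<close> contributes a letter \<open>T\<close>.\<close>

lemma cpow_hseries_short: "length v < k \<Longrightarrow> cpow_hseries \<psi> T k v = 0"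
proof (induction "length v" arbitrary: v k rule: less_induct)
  case less
  show ?case
  proof (cases v)
    case Nil then show ?thesis using less.prems by (simp add: cpow_hseries_Nil)
  next
    case (Cons c u)
    show ?thesis
    proof (cases "c = T")
      case True
      then show ?thesis using less Cons by (simp add: cpow_hseries_Cons_same)
    next
      case False
      then have "cpow_hseries \<psi> T k v
          = (\<Sum>j\<le>length u. delta_cum \<psi> (\<not> T) ((\<not> T) # take j u) * cpow_hseries \<psi> T k (drop j u))"
        using Cons cpow_hseries_Cons_other[of \<psi> T k u] by (cases c) auto
      also have "\<dots> = 0"
        by (rule sum.neutral) (use less Cons in auto)
      finally show ?thesis .
    qed
  qed
qed

section \<open>Cumulants of the letters of a word\<close>

definition nest_ending :: "(bool list \<Rightarrow> complex) \<Rightarrow> bool \<Rightarrow> bool list \<Rightarrow> ncpoly" where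
  "nest_ending \<psi> E g =
     (if g = [] then pone else if last g = E then nest_letters \<psi> g else (\<lambda>_. 0))"

lemma finsupp_nest_ending: "finsupp (nest_ending \<psi> E g)"
  by (simp add: nest_ending_def finsupp_nest_letters)

text \<open>\<open>tail_sum \<psi> \<theta> T v\<close> is the factor from \<open>\<complex>\<langle>T\<rangle>\<close> that the nested centering of \<open>v T\<close>
  leaves behind the cut after \<open>v\<close>; the coefficients \<open>(C\<^sup>k H\<^sub>\<not>\<^sub>T)(v)\<close> collect the cumulants
  \<open>E\<^sub>\<not>\<^sub>T\<close> produced inside \<open>v\<close>.\<close>

definition nest_power :: "(bool list \<Rightarrow> complex) \<Rightarrow> bool \<Rightarrow> nat \<Rightarrow> ncpoly" where
  "nest_power \<theta> T k = nest_letters \<theta> (replicate (Suc k) T)"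

definition tail_sum :: "(bool list \<Rightarrow> complex) \<Rightarrow> (bool list \<Rightarrow> complex) \<Rightarrow> bool \<Rightarrow> bool list \<Rightarrow> ncpoly" where
  "tail_sum \<psi> \<theta> T v = (\<lambda>w. \<Sum>k\<le>length v. cpow_hseries \<psi> T k v * nest_power \<theta> T k w)"

lemma nest_power_0: "nest_power \<theta> T 0 = center \<theta> (pmon [T])"
  by (simp add: nest_power_def nest_letters_single)

lemma nest_power_Suc: "nest_power \<theta> T (Suc k) = center \<theta> (pmul (pmon [T]) (nest_power \<theta> T k))"
  by (simp add: nest_power_def nest_letters_Cons)

lemma in_alg_nest_power: "in_alg T (nest_power \<theta> T k)"
  by (induction k) (simp_all add: nest_power_0 nest_power_Suc in_alg_center in_alg_pmul)

lemma finsupp_nest_power: "finsupp (nest_power \<theta> T k)"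
  by (simp add: nest_power_def finsupp_nest_letters)

lemma finsupp_tail_sum: "finsupp (tail_sum \<psi> \<theta> T v)"
  unfolding tail_sum_def by (intro finsupp_sum finsupp_scale) (simp_all add: finsupp_nest_power)

lemma in_alg_tail_sum: "in_alg T (tail_sum \<psi> \<theta> T v)"
  unfolding tail_sum_def by (intro in_alg_sum in_alg_scale) (simp_all add: in_alg_nest_power)

lemma tail_sum_Nil: "tail_sum \<psi> \<theta> T [] = nest_power \<theta> T 0"
  by (simp add: tail_sum_def cpow_hseries_Nil)

lemma tail_sum_Cons_same:
  "tail_sum \<psi> \<theta> T (T # u) = center \<theta> (pmul (pmon [T]) (tail_sum \<psi> \<theta> T u))"
proof -
  have "pmul (pmon [T]) (tail_sum \<psi> \<theta> T u)
      = (\<lambda>w. \<Sum>k\<le>length u. cpow_hseries \<psi> T k u * pmul (pmon [T]) (nest_power \<theta> T k) w)"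
    unfolding tail_sum_def by (rule ext) (simp add: pmul_sum_right pmul_scale_right)
  then have "center \<theta> (pmul (pmon [T]) (tail_sum \<psi> \<theta> T u))
      = (\<lambda>w. \<Sum>k\<le>length u. cpow_hseries \<psi> T k u * nest_power \<theta> T (Suc k) w)"
    by (simp add: center_sum finsupp_scale finsupp_pmul finsupp_nest_power center_scale nest_power_Suc)
  moreover have "tail_sum \<psi> \<theta> T (T # u)
      = (\<lambda>w. \<Sum>k\<le>length u. cpow_hseries \<psi> T k u * nest_power \<theta> T (Suc k) w)"
    unfolding tail_sum_def length_Cons sum.atMost_Suc_shift by (simp add: cpow_hseries_Cons_same)
  ultimately show ?thesis by simp
qed

lemma tail_sum_Cons_other:
  "tail_sum \<psi> \<theta> T ((\<not> T) # u) w
     = (\<Sum>j\<le>length u. delta_cum \<psi> (\<not> T) ((\<not> T) # take j u) * tail_sum \<psi> \<theta> T (drop j u) w)"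
proof -
  let ?E = "\<lambda>j. delta_cum \<psi> (\<not> T) ((\<not> T) # take j u)"
  have "tail_sum \<psi> \<theta> T ((\<not> T) # u) w = (\<Sum>k\<le>Suc (length u). \<Sum>j\<le>length u.
      ?E j * cpow_hseries \<psi> T k (drop j u) * nest_power \<theta> T k w)"
    unfolding tail_sum_def by (simp add: cpow_hseries_Cons_other sum_distrib_right)
  also have "\<dots> = (\<Sum>j\<le>length u.
      ?E j * (\<Sum>k\<le>Suc (length u). cpow_hseries \<psi> T k (drop j u) * nest_power \<theta> T k w))"
    by (subst sum.swap) (simp add: sum_distrib_left algebra_simps)
  also have "\<dots> = (\<Sum>j\<le>length u. ?E j * tail_sum \<psi> \<theta> T (drop j u) w)"
  proof (rule sum.cong[OF refl])
    fix j
    have "(\<Sum>k\<le>Suc (length u). cpow_hseries \<psi> T k (drop j u) * nest_power \<theta> T k w)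
        = (\<Sum>k\<le>length (drop j u). cpow_hseries \<psi> T k (drop j u) * nest_power \<theta> T k w)"
      by (rule sum.mono_neutral_right) (auto simp: cpow_hseries_short)
    then show "?E j * (\<Sum>k\<le>Suc (length u). cpow_hseries \<psi> T k (drop j u) * nest_power \<theta> T k w)
        = ?E j * tail_sum \<psi> \<theta> T (drop j u) w"
      by (simp add: tail_sum_def)
  qed
  finally show ?thesis .
qed

text \<open>The nested centering of \<open>u T\<close>, expanded over the cuts of \<open>u\<close> (see \<open>nest_letters_snoc\<close>).\<close>

definition cut_sum :: "(bool list \<Rightarrow> complex) \<Rightarrow> (bool list \<Rightarrow> complex) \<Rightarrow> bool \<Rightarrow> bool list \<Rightarrow> ncpoly" where
  "cut_sum \<psi> \<theta> T u =
     (\<lambda>w. \<Sum>j\<le>length u. pmul (nest_ending \<psi> (\<not> T) (take j u)) (tail_sum \<psi> \<theta> T (drop j u)) w)"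

lemma cut_sum_Nil: "cut_sum \<psi> \<theta> T [] = nest_power \<theta> T 0"
  by (simp add: cut_sum_def nest_ending_def tail_sum_Nil)

lemma cut_sum_Cons:
  "cut_sum \<psi> \<theta> T (c # u) = (\<lambda>w. tail_sum \<psi> \<theta> T (c # u) w
     + (\<Sum>j\<le>length u. pmul (nest_ending \<psi> (\<not> T) (c # take j u)) (tail_sum \<psi> \<theta> T (drop j u)) w))"
  unfolding cut_sum_def length_Cons sum.atMost_Suc_shift by (simp add: nest_ending_def)

locale c_free_pair =
  fixes \<phi> \<psi> :: "bool list \<Rightarrow> complex"
  assumes c_free: "c_free \<phi> \<psi>" and unital_phi: "unital \<phi>" and unital_psi: "unital \<psi>"
begin

lemma theta_unital: "\<theta> = \<phi> \<or> \<theta> = \<psi> \<Longrightarrow> unital \<theta>"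
  using unital_phi unital_psi by auto

lemma lin_alt_span_mult_other:
  "\<theta> = \<phi> \<or> \<theta> = \<psi> \<Longrightarrow> alt_span \<psi> E p \<Longrightarrow> in_alg (\<not> E) x \<Longrightarrow> lin \<theta> x = 0 \<Longrightarrow>
   lin \<theta> (pmul p x) = 0"
  using alt_span_mult_other[OF c_free unital_phi unital_psi, of E x p] by auto

lemma alt_span_nest_letters:
  "g \<noteq> [] \<Longrightarrow> last g = E \<Longrightarrow> alt_span \<psi> E (nest_letters \<psi> g)"
proof (induction g)
  case Nil then show ?case by simp
next
  case (Cons c g)
  show ?case
  proof (cases "g = []")
    case True
    then show ?thesis
      using Cons.prems alt_span_center[OF unital_psi, of E "pmon [E]"] by (simp add: nest_letters_single)
  next
    case False
    then have IH: "alt_span \<psi> E (nest_letters \<psi> g)" using Cons by simp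
    show ?thesis
    proof (cases "c = E")
      case True
      then show ?thesis
        using alt_span_center_left_mult_same[OF c_free unital_psi _ IH] False by (simp add: nest_letters_Cons)
    next
      case False
      then have "in_alg (\<not> E) (pmon [c])" by (cases c) auto
      then have "alt_span \<psi> E (pmul (pmon [c]) (nest_letters \<psi> g))"
        using alt_span_left_mult_other[OF unital_psi _ IH] by simp
      then show ?thesis
        using \<open>g \<noteq> []\<close> alt_span_psi_zero[OF c_free] center_eq_self by (metis nest_letters_Cons)
    qed
  qed
qed

lemma alt_span_nest_ending: "g \<noteq> [] \<Longrightarrow> alt_span \<psi> E (nest_ending \<psi> E g)"
  by (simp add: nest_ending_def alt_span_nest_letters alt_span.zero)

lemma pmon_nest_ending:
  assumes "g \<noteq> [] \<or> c = E"
  shows "pmul (pmon [c]) (nest_ending \<psi> E g)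
    = (\<lambda>w. nest_ending \<psi> E (c # g) w + delta_cum \<psi> E (c # g) * pone w)"
proof (cases "g = []")
  case True
  then have "c = E" using assms by simp
  then show ?thesis using True
    by (auto simp: nest_ending_def nest_letters_single delta_cum_def center_def bcum_letters_single[simplified])
next
  case False
  show ?thesis
  proof (cases "last g = E")
    case True
    let ?p = "pmul (pmon [c]) (nest_letters \<psi> g)"
    have "delta_cum \<psi> E (c # g) = lin \<psi> ?p"
    proof (cases "c = E")
      case True then show ?thesis
        using \<open>g \<noteq> []\<close> \<open>last g = E\<close> bcum_letters_Cons[OF unital_psi] by (simp add: delta_cum_def)
    next
      case c: False
      have "in_alg (\<not> E) (pmon [c])" using c by (cases c) auto
      then have "alt_span \<psi> E ?p"
        using alt_span_left_mult_other[OF unital_psi] alt_span_nest_letters \<open>g \<noteq> []\<close> \<open>last g = E\<close> by blast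
      then show ?thesis using c alt_span_psi_zero[OF c_free] by (simp add: delta_cum_def)
    qed
    moreover have "nest_ending \<psi> E (c # g) = center \<psi> ?p" "nest_ending \<psi> E g = nest_letters \<psi> g"
      using \<open>g \<noteq> []\<close> True by (simp_all add: nest_ending_def nest_letters_Cons)
    ultimately show ?thesis by (simp add: center_def)
  next
    case False
    then show ?thesis using \<open>g \<noteq> []\<close> by (simp add: nest_ending_def delta_cum_def)
  qed
qed

lemma pmon_nest_ending_mult:
  "g \<noteq> [] \<or> c = E \<Longrightarrow> pmul (pmul (pmon [c]) (nest_ending \<psi> E g)) x
     = (\<lambda>w. pmul (nest_ending \<psi> E (c # g)) x w + delta_cum \<psi> E (c # g) * x w)"
  by (simp add: pmon_nest_ending pmul_add_left_fun pmul_scale_left_fun)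

lemma lin_nest_power: "\<theta> = \<phi> \<or> \<theta> = \<psi> \<Longrightarrow> lin \<theta> (nest_power \<theta> T k) = 0"
  by (simp add: nest_power_def nest_letters_def lin_center finsupp_nest theta_unital)

lemma lin_pmon_nest_power:
  "\<theta> = \<phi> \<or> \<theta> = \<psi> \<Longrightarrow>
   lin \<theta> (pmul (pmon [T]) (nest_power \<theta> T k)) = bcum \<theta> (replicate (Suc (Suc k)) [T])"
  using bcum_letters_Cons[OF theta_unital, of \<theta> "replicate (Suc k) T" T]
  by (simp add: nest_power_def letters_def)

lemma lin_tail_sum: "\<theta> = \<phi> \<or> \<theta> = \<psi> \<Longrightarrow> lin \<theta> (tail_sum \<psi> \<theta> T v) = 0"
  unfolding tail_sum_def
  by (subst lin_sum) (simp_all add: finsupp_scale finsupp_nest_power lin_scale lin_nest_power)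

lemma lin_nest_ending_tail_sum:
  "\<theta> = \<phi> \<or> \<theta> = \<psi> \<Longrightarrow>
   lin \<theta> (pmul (nest_ending \<psi> (\<not> T) (c # g)) (tail_sum \<psi> \<theta> T v)) = 0"
  by (rule lin_alt_span_mult_other[where E="\<not> T"])
    (simp_all add: alt_span_nest_ending in_alg_tail_sum lin_tail_sum)

text \<open>Multiplying from the left by a letter: a letter \<open>\<not> T\<close> extends every \<open>nest_ending\<close> and
  produces the cumulants \<open>E\<^sub>\<not>\<^sub>T\<close>, which rebuild \<open>tail_sum\<close>; a letter \<open>T\<close> only acts on the
  empty cut.\<close>

lemma pmon_cut_sum:
  "pmul (pmon [c]) (cut_sum \<psi> \<theta> T u) = (\<lambda>w.
     (if c = T then pmul (pmon [T]) (tail_sum \<psi> \<theta> T u) else tail_sum \<psi> \<theta> T (c # u)) w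
     + (\<Sum>j\<le>length u. pmul (nest_ending \<psi> (\<not> T) (c # take j u)) (tail_sum \<psi> \<theta> T (drop j u)) w))"
proof (rule ext)
  fix w
  let ?A = "\<lambda>j. tail_sum \<psi> \<theta> T (drop j u)" and ?g = "\<lambda>j. take j u"
  let ?P = "\<lambda>j. pmul (nest_ending \<psi> (\<not> T) (c # ?g j)) (?A j) w"
  have "pmul (pmon [c]) (cut_sum \<psi> \<theta> T u) w
      = (\<Sum>j\<le>length u. pmul (pmul (pmon [c]) (nest_ending \<psi> (\<not> T) (?g j))) (?A j) w)"
    unfolding cut_sum_def by (simp add: pmul_sum_right pmul_assoc)
  also have "\<dots> = (if c = T then pmul (pmon [T]) (?A 0) else tail_sum \<psi> \<theta> T (c # u)) w
      + (\<Sum>j\<le>length u. ?P j)"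
  proof (cases "c = T")
    case True
    have "?P 0 = 0" using True by (simp add: nest_ending_def)
    moreover have "pmul (pmul (pmon [c]) (nest_ending \<psi> (\<not> T) (?g (Suc i)))) (?A (Suc i)) w
        = ?P (Suc i)" if "i < length u" for i
    proof -
      have "?g (Suc i) \<noteq> []" using that by (cases u) auto
      then show ?thesis using True pmon_nest_ending_mult[of "?g (Suc i)" c "\<not> T"] by (simp add: delta_cum_def)
    qed
    ultimately show ?thesis
      using True by (simp add: sum.atMost_shift nest_ending_def)
  next
    case False
    then have "c = (\<not> T)" by simp
    then show ?thesis
      by (simp add: pmon_nest_ending_mult tail_sum_Cons_other sum.distrib)
  qed
  finally show "pmul (pmon [c]) (cut_sum \<psi> \<theta> T u) w = (if c = T then pmul (pmon [T]) (tail_sum \<psi> \<theta> T u)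
      else tail_sum \<psi> \<theta> T (c # u)) w + (\<Sum>j\<le>length u. ?P j)"
    by simp
qed

lemma nest_letters_snoc:
  assumes th: "\<theta> = \<phi> \<or> \<theta> = \<psi>"
  shows "nest_letters \<theta> (u @ [T]) = cut_sum \<psi> \<theta> T u"
proof (induction u)
  case Nil
  show ?case by (simp add: nest_letters_single cut_sum_Nil nest_power_0)
next
  case (Cons c u)
  let ?P = "\<lambda>w. \<Sum>j\<le>length u. pmul (nest_ending \<psi> (\<not> T) (c # take j u)) (tail_sum \<psi> \<theta> T (drop j u)) w"
  let ?first = "if c = T then pmul (pmon [T]) (tail_sum \<psi> \<theta> T u) else tail_sum \<psi> \<theta> T (c # u)"
  have finP: "finsupp ?P"
    by (intro finsupp_sum finsupp_pmul finsupp_nest_ending finsupp_tail_sum) simp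
  have linP: "lin \<theta> ?P = 0"
    using th by (subst lin_sum) (simp_all add: finsupp_pmul finsupp_nest_ending finsupp_tail_sum
        lin_nest_ending_tail_sum)
  have "center \<theta> ?first = tail_sum \<psi> \<theta> T (c # u)"
    using th by (simp add: tail_sum_Cons_same center_eq_self lin_tail_sum)
  moreover have "finsupp ?first" by (simp add: finsupp_pmul finsupp_tail_sum)
  moreover have "nest_letters \<theta> ((c # u) @ [T]) = center \<theta> (\<lambda>w. ?first w + ?P w)"
    using Cons.IH pmon_cut_sum[of c \<theta> T u] by (simp add: nest_letters_Cons)
  ultimately show ?case
    using finP linP by (simp add: center_add center_eq_self cut_sum_Cons)
qed

lemma bcum_letters_snoc:
  assumes th: "\<theta> = \<phi> \<or> \<theta> = \<psi>"
  shows "bcum \<theta> (letters (c # v @ [T])) =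
    (if c = T then (\<Sum>k\<le>length v. cpow_hseries \<psi> T k v * bcum \<theta> (replicate (Suc (Suc k)) [T])) else 0)"
proof -
  let ?P = "\<lambda>w. \<Sum>j\<le>length v. pmul (nest_ending \<psi> (\<not> T) (c # take j v)) (tail_sum \<psi> \<theta> T (drop j v)) w"
  let ?first = "if c = T then pmul (pmon [T]) (tail_sum \<psi> \<theta> T v) else tail_sum \<psi> \<theta> T (c # v)"
  have linP: "lin \<theta> ?P = 0"
    using th by (subst lin_sum) (simp_all add: finsupp_pmul finsupp_nest_ending finsupp_tail_sum
        lin_nest_ending_tail_sum)
  have "bcum \<theta> (letters (c # v @ [T])) = lin \<theta> (pmul (pmon [c]) (cut_sum \<psi> \<theta> T v))"
    using bcum_letters_Cons[OF theta_unital[OF th], of "v @ [T]" c] nest_letters_snoc[OF th] by simp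
  also have "\<dots> = lin \<theta> ?first"
    unfolding pmon_cut_sum using linP
    by (subst lin_add) (auto intro!: finsupp_sum finsupp_pmul simp: finsupp_nest_ending finsupp_tail_sum)
  also have "\<dots> = (if c = T then (\<Sum>k\<le>length v. cpow_hseries \<psi> T k v * bcum \<theta> (replicate (Suc (Suc k)) [T])) else 0)"
  proof (cases "c = T")
    case True
    have "pmul (pmon [T]) (tail_sum \<psi> \<theta> T v)
        = (\<lambda>w. \<Sum>k\<le>length v. cpow_hseries \<psi> T k v * pmul (pmon [T]) (nest_power \<theta> T k) w)"
      unfolding tail_sum_def by (rule ext) (simp add: pmul_sum_right pmul_scale_right)
    then show ?thesis using True th
      by (simp, subst lin_sum)
        (simp_all add: finsupp_scale finsupp_pmul finsupp_nest_power lin_scale lin_pmon_nest_power)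
  qed (simp add: lin_tail_sum th)
  finally show ?thesis .
qed

end

section \<open>Block cumulants\<close>

fun pure_blocks :: "bool list list \<Rightarrow> bool" where
  "pure_blocks [] = True"
| "pure_blocks (b # bs) \<longleftrightarrow> b \<noteq> [] \<and> (\<forall>x\<in>set b. x = hd b) \<and> (bs \<noteq> [] \<longrightarrow> hd (hd bs) \<noteq> hd b)
     \<and> pure_blocks bs"

lemma blocks_pure_concat:
  "pure_blocks (blocks w) \<and> concat (blocks w) = w \<and> (w \<noteq> [] \<longrightarrow> blocks w \<noteq> [] \<and> hd (hd (blocks w)) = hd w)"
proof (induction w)
  case Nil then show ?case by simp
next
  case (Cons c w)
  show ?case
  proof (cases "blocks w")
    case Nil
    then have "w = []" using Cons.IH by auto
    then show ?thesis by simp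
  next
    case (Cons b bs)
    then have pure: "pure_blocks (b # bs)" and w: "b @ concat bs = w"
      using Cons.IH by auto
    show ?thesis
    proof (cases "hd b = c")
      case True
      then have "blocks (c # w) = (c # b) # bs" using Cons by simp
      moreover have "pure_blocks ((c # b) # bs)"
        using pure True by auto
      ultimately show ?thesis using w by (simp del: pure_blocks.simps)
    next
      case False
      then have "blocks (c # w) = [c] # b # bs" using Cons by simp
      moreover have "pure_blocks ([c] # b # bs)"
        unfolding pure_blocks.simps(2)[of "[c]"] using pure False by (simp del: pure_blocks.simps)
      ultimately show ?thesis using w by (simp del: pure_blocks.simps)
    qed
  qed
qed

lemma pure_blocks_take: "pure_blocks bs \<Longrightarrow> pure_blocks (take k bs)"
proof (induction bs arbitrary: k)
  case Nil then show ?case by simp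
next
  case (Cons b bs)
  show ?case
  proof (cases k)
    case (Suc k')
    have "take k' bs \<noteq> [] \<Longrightarrow> hd (take k' bs) = hd bs" by (cases bs; cases k') auto
    then show ?thesis using Cons Suc by auto
  qed simp
qed

definition block_boundary :: "bool list \<Rightarrow> nat \<Rightarrow> bool" where
  "block_boundary w j \<longleftrightarrow> drop j w = [] \<or> last (take j w) \<noteq> hd (drop j w)"

lemma no_boundary_inside_block:
  assumes b: "\<forall>x\<in>set b. x = hd b" and j: "1 \<le> j" "j < length b"
  shows "\<not> block_boundary (b @ w') j"
proof -
  have "take j b \<noteq> []" "drop j b \<noteq> []" using j by auto
  then have "last (take j b) \<in> set b" "hd (drop j b) \<in> set b"
    by (meson in_set_takeD last_in_set, meson hd_in_set in_set_dropD)
  then have "last (take j b) = hd b" "hd (drop j b) = hd b" using b by blast+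
  then show ?thesis using j \<open>drop j b \<noteq> []\<close> by (simp add: block_boundary_def)
qed

lemma sum_boundaries_append_block:
  fixes F :: "bool list \<Rightarrow> bool list \<Rightarrow> 'a::comm_monoid_add"
  assumes b: "b \<noteq> []" "\<forall>x\<in>set b. x = hd b" and w': "w' = [] \<or> hd w' \<noteq> hd b"
  shows "(\<Sum>j\<in>{1..length (b @ w')}. if block_boundary (b @ w') j then F (take j (b @ w')) (drop j (b @ w')) else 0)
    = F b w' + (\<Sum>j\<in>{1..length w'}. if block_boundary w' j then F (b @ take j w') (drop j w') else 0)"
proof -
  let ?m = "length b"
  let ?h = "\<lambda>j. if block_boundary (b @ w') j then F (take j (b @ w')) (drop j (b @ w')) else 0"
  have "{1..?m} = insert ?m {1..<?m}" using b(1) by (cases b) auto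
  moreover have "block_boundary (b @ w') ?m"
    using b w' by (cases w') (auto simp: block_boundary_def)
  moreover have "?h j = 0" if "j \<in> {1..<?m}" for j
    using no_boundary_inside_block[OF b(2)] that by auto
  ultimately have first: "(\<Sum>j\<in>{1..?m}. ?h j) = F b w'" by simp
  have "?h (j + ?m) = (if block_boundary w' j then F (b @ take j w') (drop j w') else 0)"
    if "j \<in> {1..length w'}" for j
  proof -
    have "take j w' \<noteq> []" using that by auto
    then show ?thesis by (simp add: block_boundary_def)
  qed
  then have rest: "(\<Sum>j\<in>{?m + 1..?m + length w'}. ?h j)
      = (\<Sum>j\<in>{1..length w'}. if block_boundary w' j then F (b @ take j w') (drop j w') else 0)"
    using sum.shift_bounds_cl_nat_ivl[of ?h 1 ?m "length w'"] by (simp add: add.commute)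
  have "(\<Sum>j\<in>{1..?m + length w'}. ?h j) = (\<Sum>j\<in>{1..?m}. ?h j) + (\<Sum>j\<in>{?m + 1..?m + length w'}. ?h j)"
    by (rule sum.ub_add_nat) simp
  then show ?thesis using first rest by simp
qed

text \<open>The cuts between blocks are exactly the block boundaries of the concatenation.\<close>

lemma sum_blocks_eq_sum_boundaries:
  fixes F :: "bool list \<Rightarrow> bool list \<Rightarrow> 'a::comm_monoid_add"
  assumes "pure_blocks bs" "bs \<noteq> []"
  shows "(\<Sum>k\<in>{1..length bs}. F (concat (take k bs)) (concat (drop k bs))) =
    (\<Sum>j\<in>{1..length (concat bs)}.
       if block_boundary (concat bs) j then F (take j (concat bs)) (drop j (concat bs)) else 0)"
  using assms
proof (induction bs arbitrary: F)
  case Nil then show ?case by simp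
next
  case (Cons b bs)
  have b: "b \<noteq> []" "\<forall>x\<in>set b. x = hd b" and pure: "pure_blocks bs"
    using Cons.prems by auto
  have "concat bs = [] \<or> hd (concat bs) \<noteq> hd b"
    using Cons.prems by (cases bs) auto
  note append_block = sum_boundaries_append_block[OF b this, of F]
  show ?case
  proof (cases "bs = []")
    case True then show ?thesis using append_block by (simp cong: if_cong)
  next
    case False
    have "(\<Sum>k\<in>{1..length (b # bs)}. F (concat (take k (b # bs))) (concat (drop k (b # bs))))
        = F b (concat bs) + (\<Sum>k\<in>{1..length bs}. F (b @ concat (take k bs)) (concat (drop k bs)))"
      unfolding length_Cons sum_atLeast1_atMost_Suc by simp
    also have "\<dots> = F b (concat bs) + (\<Sum>j\<in>{1..length (concat bs)}.
        if block_boundary (concat bs) j then F (b @ take j (concat bs)) (drop j (concat bs)) else 0)"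
      using Cons.IH[OF pure False, of "\<lambda>u v. F (b @ u) v"] by simp
    finally show ?thesis using append_block by (simp cong: if_cong)
  qed
qed

definition letter_cum :: "(bool list \<Rightarrow> complex) \<Rightarrow> ncpoly" where
  "letter_cum \<psi> w = (if w = [] then 0 else bcum \<psi> (letters w))"

lemma concat_letters [simp]: "concat (letters w) = w"
  by (induction w) auto

lemma length_letters [simp]: "length (letters w) = length w"
  by (simp add: letters_def)

lemma take_letters: "take k (letters w) = letters (take k w)"
  by (simp add: letters_def take_map)

lemma drop_letters: "drop k (letters w) = letters (drop k w)"
  by (simp add: letters_def drop_map)

lemma moment_letter_cum:
  assumes u: "unital \<psi>"
  shows "\<psi> w = pone w + pmul (letter_cum \<psi>) \<psi> w"
proof (cases "w = []")
  case True then show ?thesis using u by (simp add: unital_def pone_def letter_cum_def)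
next
  case False
  let ?n = "length w"
  have "bcum \<psi> (letters w) = \<psi> w - (\<Sum>k\<in>{1..<?n}. bcum \<psi> (letters (take k w)) * \<psi> (drop k w))"
    using False by (subst bcum.simps) (simp add: take_letters drop_letters)
  moreover have "(\<Sum>k\<in>{1..<?n}. bcum \<psi> (letters (take k w)) * \<psi> (drop k w))
      = (\<Sum>k\<in>{1..<?n}. letter_cum \<psi> (take k w) * \<psi> (drop k w))"
    by (rule sum.cong) (auto simp: letter_cum_def)
  moreover have "{1..?n} = insert ?n {1..<?n}" using False by (cases w) auto
  then have "pmul (letter_cum \<psi>) \<psi> w = (\<Sum>k\<in>{1..<?n}. letter_cum \<psi> (take k w) * \<psi> (drop k w)) + letter_cum \<psi> w"
    using u by (simp add: pmul_split_Nil letter_cum_def unital_def add.commute)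
  ultimately show ?thesis using False by (simp add: pone_def letter_cum_def)
qed

definition hseries_sum :: "(bool list \<Rightarrow> complex) \<Rightarrow> ncpoly" where
  "hseries_sum \<psi> u = hseries \<psi> True u + hseries \<psi> False u - pone u"

definition moment_avoiding :: "(bool list \<Rightarrow> complex) \<Rightarrow> bool \<Rightarrow> ncpoly" where
  "moment_avoiding \<psi> L v = (if v \<noteq> [] \<and> hd v = L then 0 else \<psi> v)"

lemma hseries_sum_boundary_term:
  assumes "u \<noteq> []"
  shows "(if v = [] \<or> last u \<noteq> hd v then hseries_sum \<psi> u * \<psi> v else 0)
    = hseries \<psi> True u * moment_avoiding \<psi> True v + hseries \<psi> False u * moment_avoiding \<psi> False v"
proof -
  have "last u = L \<and> hseries \<psi> (\<not> L) u = 0" if "hseries \<psi> L u \<noteq> 0" for L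
    using hseries_support[of \<psi> L u] hseries_support[of \<psi> "\<not> L" u] that assms by auto
  then show ?thesis
    using assms by (cases "hseries \<psi> True u = 0"; cases "hseries \<psi> False u = 0")
      (auto simp: hseries_sum_def moment_avoiding_def pone_def)
qed

context c_free_pair
begin

lemma bcum_letters_mixed_ends:
  assumes "\<theta> = \<phi> \<or> \<theta> = \<psi>" and "w \<noteq> []" "hd w \<noteq> last w"
  shows "bcum \<theta> (letters w) = 0"
proof -
  obtain c r where w: "w = c # r" using assms(2) by (cases w) auto
  have "r \<noteq> []" using assms(3) w by auto
  moreover have "c \<noteq> last r" using assms(3) w calculation by simp
  ultimately show ?thesis
    using bcum_letters_snoc[OF assms(1), of c "butlast r" "last r"] w by simp
qed

lemma letter_cum_split: "letter_cum \<psi> w = delta_cum \<psi> L w + delta_cum \<psi> (\<not> L) w"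
  using bcum_letters_mixed_ends[of \<psi> w] by (cases "w = []") (auto simp: letter_cum_def delta_cum_def)

lemma pmul_delta_cum_moment:
  "pmul (delta_cum \<psi> L) \<psi> v = (if v \<noteq> [] \<and> hd v = L then \<psi> v else 0)"
proof (cases v)
  case (Cons c v')
  show ?thesis
  proof (cases "c = L")
    case True
    have "pmul (delta_cum \<psi> L) \<psi> v = (\<Sum>j\<le>length v'. letter_cum \<psi> (c # take j v') * \<psi> (drop j v'))"
      using True Cons by (simp add: pmul_delta_cum_Cons letter_cum_split[of _ L] delta_cum_def)
    also have "\<dots> = pmul (letter_cum \<psi>) \<psi> v"
      unfolding Cons pmul_Cons by (simp add: letter_cum_def pmul_def)
    also have "\<dots> = \<psi> v" using moment_letter_cum[OF unital_psi, of v] Cons by (simp add: pone_def)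
    finally show ?thesis using True Cons by simp
  qed (use Cons in \<open>simp add: pmul_delta_cum_Cons delta_cum_def\<close>)
qed simp

text \<open>\<open>\<psi> = H\<^sub>L (1 - E\<^sub>L) \<psi>\<close>, and \<open>(1 - E\<^sub>L) \<psi>\<close> is \<open>\<psi>\<close> on the words that do not start with \<open>L\<close>.\<close>

lemma pmul_hseries_moment_avoiding: "pmul (hseries \<psi> L) (moment_avoiding \<psi> L) = \<psi>"
proof -
  have "moment_avoiding \<psi> L = pmul (\<lambda>w. pone w - delta_cum \<psi> L w) \<psi>"
    by (rule ext) (simp add: pmul_diff_left pmul_delta_cum_moment moment_avoiding_def)
  then show ?thesis
    using geom_left_inverse[of "delta_cum \<psi> L"] by (simp add: hseries_def flip: pmul_assoc)
qed

lemma boundary_sum_eq_moment: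
  assumes "w \<noteq> []"
  shows "(\<Sum>j\<in>{1..length w}. if block_boundary w j then hseries_sum \<psi> (take j w) * \<psi> (drop j w) else 0)
    = \<psi> w"
proof -
  let ?S = "\<lambda>L. (\<Sum>j\<in>{1..length w}. hseries \<psi> L (take j w) * moment_avoiding \<psi> L (drop j w))"
  have S: "?S L = \<psi> w - moment_avoiding \<psi> L w" for L
    using pmul_split_Nil[of "hseries \<psi> L" "moment_avoiding \<psi> L" w] pmul_hseries_moment_avoiding[of L]
    by simp
  have "(\<Sum>j\<in>{1..length w}. if block_boundary w j then hseries_sum \<psi> (take j w) * \<psi> (drop j w) else 0)
      = (\<Sum>j\<in>{1..length w}. hseries \<psi> True (take j w) * moment_avoiding \<psi> True (drop j w)
          + hseries \<psi> False (take j w) * moment_avoiding \<psi> False (drop j w))"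
  proof (rule sum.cong[OF refl])
    fix j assume "j \<in> {1..length w}"
    then have "take j w \<noteq> []" using assms by auto
    then show "(if block_boundary w j then hseries_sum \<psi> (take j w) * \<psi> (drop j w) else 0)
        = hseries \<psi> True (take j w) * moment_avoiding \<psi> True (drop j w)
          + hseries \<psi> False (take j w) * moment_avoiding \<psi> False (drop j w)"
      unfolding block_boundary_def by (rule hseries_sum_boundary_term)
  qed
  also have "\<dots> = ?S True + ?S False"
    by (rule sum.distrib)
  also have "\<dots> = \<psi> w"
    unfolding S using assms by (cases "hd w") (simp_all add: moment_avoiding_def)
  finally show ?thesis .
qed

lemma bcum_pure_blocks:
  "pure_blocks bs \<Longrightarrow> bs \<noteq> [] \<Longrightarrow> bcum \<psi> bs = hseries_sum \<psi> (concat bs)"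
proof (induction "length bs" arbitrary: bs rule: less_induct)
  case less
  let ?n = "length bs"
  let ?f = "\<lambda>k. hseries_sum \<psi> (concat (take k bs)) * \<psi> (concat (drop k bs))"
  have ne: "concat bs \<noteq> []" using less.prems by (cases bs) simp_all
  have "\<psi> (concat bs) = (\<Sum>j\<in>{1..length (concat bs)}. if block_boundary (concat bs) j
      then hseries_sum \<psi> (take j (concat bs)) * \<psi> (drop j (concat bs)) else 0)"
    using boundary_sum_eq_moment[OF ne] by (simp only:)
  also have "\<dots> = (\<Sum>k\<in>{1..?n}. ?f k)"
    using sum_blocks_eq_sum_boundaries[OF less.prems, of "\<lambda>u v. hseries_sum \<psi> u * \<psi> v"] by (simp only:)
  also have "\<dots> = (\<Sum>k\<in>{1..<?n}. ?f k) + hseries_sum \<psi> (concat bs)"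
  proof -
    have "{1..?n} = insert ?n {1..<?n}" using less.prems(2) by (cases bs) auto
    then show ?thesis using unital_psi by (simp add: unital_def add.commute)
  qed
  also have "(\<Sum>k\<in>{1..<?n}. ?f k) = (\<Sum>k\<in>{1..<?n}. bcum \<psi> (take k bs) * \<psi> (concat (drop k bs)))"
  proof (rule sum.cong[OF refl])
    fix k assume "k \<in> {1..<?n}"
    then have "take k bs \<noteq> []" "length (take k bs) < ?n" "pure_blocks (take k bs)"
      using less.prems pure_blocks_take by auto
    then show "?f k = bcum \<psi> (take k bs) * \<psi> (concat (drop k bs))"
      using less.hyps by simp
  qed
  finally show ?case using less.prems by (subst bcum.simps) simp
qed

lemma beta_b_eq_hseries: "beta_b \<psi> L = hseries \<psi> L"
proof
  fix w
  show "beta_b \<psi> L w = hseries \<psi> L w"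
  proof (cases "w = []")
    case True then show ?thesis by (simp add: beta_b_def)
  next
    case False
    then have "pure_blocks (blocks w)" "concat (blocks w) = w" "blocks w \<noteq> []"
      using blocks_pure_concat[of w] by auto
    then have "bcum \<psi> (blocks w) = hseries_sum \<psi> w"
      using bcum_pure_blocks[of "blocks w"] by simp
    then have sum: "bcum \<psi> (blocks w) = hseries \<psi> L w + hseries \<psi> (\<not> L) w"
      using False by (cases L) (simp_all add: hseries_sum_def pone_def)
    show ?thesis
    proof (cases "hd w = L \<and> last w = L")
      case True
      then have "hseries \<psi> (\<not> L) w = 0" using hseries_support[of \<psi> "\<not> L" w] False by auto
      then show ?thesis using True False sum by (simp add: beta_b_def)
    next
      case not_L: False
      then have "hseries \<psi> L w = 0" using hseries_support[of \<psi> L w] False by auto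
      then show ?thesis using not_L False unfolding beta_b_def by auto
    qed
  qed
qed

end

lemma ppow_cseries_Suc:
  "ppow (cseries \<psi> T) (Suc k) w = (if w \<noteq> [] \<and> last w = T then cpow_hseries \<psi> T k (butlast w) else 0)"
proof -
  have "ppow (cseries \<psi> T) (Suc k) = pmul (cpow_hseries \<psi> T k) (pmon [T])"
    unfolding ppow_Suc_right cpow_hseries_def by (simp only: cseries_def pmul_assoc)
  then show ?thesis by (simp only: pmul_pmon_letter_right)
qed

lemma (in c_free_pair) beta_delta_eq_cseries_sum:
  assumes th: "\<theta> = \<phi> \<or> \<theta> = \<psi>"
  shows "beta_delta \<theta> T (T # w)
    = (\<Sum>k\<in>{1..length w + 1}. bcum \<theta> (replicate k [T]) * ppow (cseries \<psi> T) (k - 1) w)"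
proof (cases "w = []")
  case True then show ?thesis by (simp add: beta_delta_def pone_def)
next
  case False
  let ?v = "butlast w"
  let ?f = "\<lambda>k. bcum \<theta> (replicate k [T]) * ppow (cseries \<psi> T) (k - 1) w"
  have "(\<Sum>k\<in>{1..length w + 1}. ?f k) = ?f 1 + (\<Sum>k\<in>{1..length w}. ?f (Suc k))"
    unfolding Suc_eq_plus1[symmetric] by (rule sum_atLeast1_atMost_Suc)
  also have "?f 1 = 0"
    using False by (simp add: pone_def)
  also have "(\<Sum>k\<in>{1..length w}. ?f (Suc k)) = (\<Sum>k<length w. ?f (Suc (Suc k)))"
    unfolding One_nat_def by (rule sum.atLeast1_atMost_eq)
  finally have "(\<Sum>k\<in>{1..length w + 1}. ?f k)
      = (\<Sum>k<length w. bcum \<theta> (replicate (Suc (Suc k)) [T]) * ppow (cseries \<psi> T) (Suc k) w)"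
    by simp
  also have "\<dots> = (if last w = T
      then (\<Sum>k\<le>length ?v. cpow_hseries \<psi> T k ?v * bcum \<theta> (replicate (Suc (Suc k)) [T])) else 0)"
  proof -
    have "{..<length w} = {..length ?v}" using False by (cases w) (simp_all add: lessThan_Suc_atMost)
    then show ?thesis using False by (simp add: ppow_cseries_Suc mult.commute del: ppow.simps)
  qed
  also have "\<dots> = beta_delta \<theta> T (T # w)"
  proof (cases "last w = T")
    case True
    obtain v where "w = v @ [T]" using False True by (cases w rule: rev_cases) auto
    then show ?thesis using bcum_letters_snoc[OF th, of T v T] by (simp add: beta_delta_def letters_def)
  qed (use \<open>w \<noteq> []\<close> in \<open>simp add: beta_delta_def\<close>)
  finally show ?thesis ..
qed

section \<open>From word series to matrix-valued power series\<close>

lemma smat_diff: "smat (a - b) M = smat a M - smat b M"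
  by (simp add: smat_def vec_eq_iff algebra_simps)

lemma smat_mult: "smat (a * b) M = smat a (smat b M)"
  by (simp add: smat_def vec_eq_iff)

lemma smat_0 [simp]: "smat 0 M = 0"
  by (simp add: smat_def vec_eq_iff)

lemma smat_1 [simp]: "smat 1 M = M"
  by (simp add: smat_def vec_eq_iff)

lemma smat_sum: "smat (\<Sum>i\<in>I. f i) M = (\<Sum>i\<in>I. smat (f i) M)"
  by (simp add: smat_def vec_eq_iff sum_distrib_right)

lemma smat_sum_right: "smat c (\<Sum>i\<in>I. M i) = (\<Sum>i\<in>I. smat c (M i))"
  by (simp add: smat_def vec_eq_iff sum_distrib_left)

lemma smat_matrix_mult_left: "smat a M ** N = smat a (M ** N)"
  by (simp add: smat_def vec_eq_iff matrix_matrix_mult_def sum_distrib_left mult.assoc)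

lemma smat_matrix_mult_right: "M ** smat a N = smat a (M ** N)"
  by (simp add: smat_def vec_eq_iff matrix_matrix_mult_def sum_distrib_left algebra_simps)

lemma matrix_add_rdistrib: "(A + B) ** C = A ** C + B ** (C :: 'a::semiring_1^'n^'m)"
  by (vector matrix_matrix_mult_def sum.distrib[symmetric] field_simps)

lemma matrix_sum_mult: "(\<Sum>i\<in>I. M i) ** (N :: 'a::semiring_1^'n^'m) = (\<Sum>i\<in>I. M i ** N)"
  by (induction I rule: infinite_finite_induct) (simp_all add: matrix_add_rdistrib)

lemma matrix_mult_sum: "(N :: 'a::semiring_1^'n^'m) ** (\<Sum>i\<in>I. M i) = (\<Sum>i\<in>I. N ** M i)"
  by (induction I rule: infinite_finite_induct) (simp_all add: matrix_add_ldistrib)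

lemma wmat_Cons: "wmat A B (c # w) = (if c then A else B) ** wmat A B w"
  by (simp add: wmat_def)

lemma wmat_append: "wmat A B (u @ v) = wmat A B u ** wmat A B v"
  by (induction u) (simp_all add: wmat_def matrix_mul_assoc)

definition words :: "nat \<Rightarrow> bool list set" where
  "words n = {w. length w = n}"

lemma finite_words [simp]: "finite (words n)"
  using finite_lists_length_eq[of "UNIV :: bool set" n] by (simp add: words_def)

lemma words_0: "words 0 = {[]}"
  by (auto simp: words_def)

lemma sum_words_split:
  "k \<le> n \<Longrightarrow> (\<Sum>w\<in>words n. H (take k w) (drop k w)) = (\<Sum>u\<in>words k. \<Sum>v\<in>words (n - k). H u v)"
proof -
  assume k: "k \<le> n"
  have "(\<Sum>u\<in>words k. \<Sum>v\<in>words (n - k). H u v) = (\<Sum>p\<in>words k \<times> words (n - k). H (fst p) (snd p))"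
    by (simp add: sum.cartesian_product split_def)
  also have "\<dots> = (\<Sum>w\<in>words n. H (take k w) (drop k w))"
    by (rule sum.reindex_bij_witness[where j="\<lambda>p. fst p @ snd p" and i="\<lambda>w. (take k w, drop k w)"])
       (use k in \<open>auto simp: words_def\<close>)
  finally show ?thesis by simp
qed

lemma sum_words_Suc:
  "(\<Sum>w\<in>words (Suc m). F w) = (\<Sum>w\<in>words m. F (True # w)) + (\<Sum>w\<in>words m. F (False # w))"
proof -
  have split: "words (Suc m) = Cons True ` words m \<union> Cons False ` words m"
    by (auto simp: words_def length_Suc_conv)
  show ?thesis unfolding split by (subst sum.union_disjoint) (auto simp: sum.reindex)
qed

text \<open>\<open>mat_series f A B\<close> is the image of the word series \<open>f\<close> under \<open>w \<mapsto> z\<^bsup>|w|\<^esup> C\<^sub>w\<^sub>1\<cdots>C\<^sub>w\<^sub>n\<close>, a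
  homomorphism from concatenation convolution to the Cauchy product.\<close>

definition mat_series :: "(bool list \<Rightarrow> complex) \<Rightarrow> complex^'n^'n \<Rightarrow> complex^'n^'n \<Rightarrow> 'n mps" where
  "mat_series f A B n = (\<Sum>w\<in>words n. smat (f w) (wmat A B w))"

lemma apply_Psi_eq_mat_series: "apply_Psi L A B = mat_series L A B"
  by (rule ext) (simp add: apply_Psi_def mat_series_def words_def)

lemma mat_series_pmul: "mat_series (pmul f g) A B n = ps_mult (mat_series f A B) (mat_series g A B) n"
proof -
  let ?t = "\<lambda>u v. smat (f u * g v) (wmat A B u ** wmat A B v)"
  have "mat_series (pmul f g) A B n = (\<Sum>w\<in>words n. \<Sum>k\<le>n. ?t (take k w) (drop k w))"
    unfolding mat_series_def pmul_def
    by (rule sum.cong[OF refl]) (simp add: words_def smat_sum wmat_append[symmetric])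
  also have "\<dots> = (\<Sum>k\<le>n. \<Sum>w\<in>words n. ?t (take k w) (drop k w))"
    by (rule sum.swap)
  also have "\<dots> = (\<Sum>k\<le>n. \<Sum>u\<in>words k. \<Sum>v\<in>words (n - k). ?t u v)"
    by (intro sum.cong refl sum_words_split) simp
  also have "\<dots> = ps_mult (mat_series f A B) (mat_series g A B) n"
    unfolding ps_mult_def mat_series_def
    by (simp only: matrix_sum_mult)
      (simp only: matrix_mult_sum smat_matrix_mult_left smat_matrix_mult_right smat_mult[symmetric] mult.commute)
  finally show ?thesis .
qed

lemma mat_series_pone: "mat_series pone A B = ps_one"
proof
  fix n show "mat_series pone A B n = ps_one n"
  proof (cases n)
    case 0 then show ?thesis by (simp add: mat_series_def words_0 ps_one_def pone_def wmat_def)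
  next
    case (Suc m)
    then have "mat_series pone A B n = (\<Sum>w\<in>words n. 0)"
      unfolding mat_series_def by (intro sum.cong) (auto simp: words_def pone_def)
    then show ?thesis by (simp add: ps_one_def Suc)
  qed
qed

lemma mat_series_diff: "mat_series (\<lambda>w. f w - g w) A B n = mat_series f A B n - mat_series g A B n"
  by (simp add: mat_series_def smat_diff sum_subtractf)

lemma mat_series_ppow: "mat_series (ppow P k) A B = ps_pow (mat_series P A B) k"
proof (induction k)
  case 0 then show ?case by (simp add: ps_pow_def mat_series_pone)
next
  case (Suc k)
  show ?case
    by (rule ext) (simp add: mat_series_pmul Suc.IH ps_pow_def)
qed

lemma mat_series_delta_cum:
  "mat_series (delta_cum \<psi> T) A B n
     = ps_z (\<lambda>m. (if T then A else B) ** apply_ZPsi (beta_delta \<psi> T) T A B m) n"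
proof (cases n)
  case 0 then show ?thesis by (simp add: mat_series_def words_0 ps_z_def)
next
  case (Suc m)
  have "delta_cum \<psi> T (T # w) = beta_delta \<psi> T (T # w)" for w
    by (simp add: delta_cum_def beta_delta_def letters_def)
  moreover have "delta_cum \<psi> T ((\<not> T) # w) = 0" for w
    by (simp add: delta_cum_def)
  ultimately have "mat_series (delta_cum \<psi> T) A B n
      = (\<Sum>w\<in>words m. smat (beta_delta \<psi> T (T # w)) (wmat A B (T # w)))"
    unfolding mat_series_def Suc sum_words_Suc by (cases T) simp_all
  also have "\<dots> = (if T then A else B) ** apply_ZPsi (beta_delta \<psi> T) T A B m"
    unfolding apply_ZPsi_def by (simp add: wmat_Cons smat_matrix_mult_right matrix_mult_sum words_def)
  finally show ?thesis by (simp add: ps_z_def Suc)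
qed

lemma mat_series_cseries:
  "mat_series (cseries \<psi> T) A B n
     = ps_z (\<lambda>m. mat_series (hseries \<psi> (\<not> T)) A B m ** (if T then A else B)) n"
proof -
  have letter: "mat_series (pmon [T]) A B k = (if k = 1 then (if T then A else B) else 0)" for k
  proof -
    have "mat_series (pmon [T]) A B k = (\<Sum>w\<in>words k. if w = [T] then wmat A B w else 0)"
      unfolding mat_series_def by (intro sum.cong) (simp_all add: pmon_def)
    also have "\<dots> = (if [T] \<in> words k then wmat A B [T] else 0)"
      by (simp add: sum.delta)
    finally show ?thesis by (auto simp: words_def wmat_Cons wmat_def)
  qed
  have "mat_series (cseries \<psi> T) A B n
      = (\<Sum>k\<le>n. if k = n - 1 \<and> n \<noteq> 0 then mat_series (hseries \<psi> (\<not> T)) A B k ** (if T then A else B) else 0)"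
    unfolding cseries_def mat_series_pmul ps_mult_def by (intro sum.cong) (auto simp: letter)
  also have "\<dots> = ps_z (\<lambda>m. mat_series (hseries \<psi> (\<not> T)) A B m ** (if T then A else B)) n"
    by (cases n) (simp_all add: ps_z_def sum.delta' del: One_nat_def)
  finally show ?thesis .
qed

context c_free_pair
begin

lemma beta_b_series_inverse:
  "ps_inverse_of (apply_Psi (beta_b \<psi> T) A B)
     (ps_one - ps_z (\<lambda>n. (if T then A else B) ** apply_ZPsi (beta_delta \<psi> T) T A B n))"
proof -
  have H: "apply_Psi (beta_b \<psi> T) A B = mat_series (hseries \<psi> T) A B"
    by (simp add: apply_Psi_eq_mat_series beta_b_eq_hseries)
  have M: "ps_one - ps_z (\<lambda>n. (if T then A else B) ** apply_ZPsi (beta_delta \<psi> T) T A B n)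
      = mat_series (\<lambda>w. pone w - delta_cum \<psi> T w) A B"
    by (simp add: fun_eq_iff mat_series_diff mat_series_pone mat_series_delta_cum)
  have inverse: "pmul (hseries \<psi> T) (\<lambda>w. pone w - delta_cum \<psi> T w) = pone"
      "pmul (\<lambda>w. pone w - delta_cum \<psi> T w) (hseries \<psi> T) = pone"
    unfolding hseries_def by (simp_all add: geom_left_inverse geom_right_inverse)
  show ?thesis
    unfolding H M ps_inverse_of_def
    by (intro conjI ext) (simp_all add: mat_series_pmul[symmetric] inverse mat_series_pone)
qed

lemma beta_delta_eq_eta_tilde:
  assumes th: "\<theta> = \<phi> \<or> \<theta> = \<psi>"
  shows "apply_ZPsi (beta_delta \<theta> T) T A B
    = eta_tilde \<theta> T (ps_z (\<lambda>n. apply_Psi (beta_b \<psi> (\<not> T)) A B n ** (if T then A else B)))"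
proof -
  let ?c = "\<lambda>k. bcum \<theta> (replicate k [T])"
  have eta: "eta_tilde \<theta> T (mat_series (cseries \<psi> T) A B) n = apply_ZPsi (beta_delta \<theta> T) T A B n" for n
  proof -
    have "eta_tilde \<theta> T (mat_series (cseries \<psi> T) A B) n
        = (\<Sum>k\<in>{1..n+1}. \<Sum>w\<in>words n. smat (?c k * ppow (cseries \<psi> T) (k - 1) w) (wmat A B w))"
      unfolding eta_tilde_def mat_series_ppow[symmetric] mat_series_def
      by (simp add: smat_sum_right smat_mult)
    also have "\<dots> = (\<Sum>w\<in>words n. smat (\<Sum>k\<in>{1..n+1}. ?c k * ppow (cseries \<psi> T) (k - 1) w) (wmat A B w))"
      by (subst sum.swap) (simp only: smat_sum)
    also have "\<dots> = apply_ZPsi (beta_delta \<theta> T) T A B n"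
      unfolding apply_ZPsi_def words_def
      by (intro sum.cong) (simp_all add: beta_delta_eq_cseries_sum[OF th])
    finally show ?thesis .
  qed
  have C: "ps_z (\<lambda>n. apply_Psi (beta_b \<psi> (\<not> T)) A B n ** (if T then A else B))
      = mat_series (cseries \<psi> T) A B"
    by (simp add: fun_eq_iff apply_Psi_eq_mat_series beta_b_eq_hseries mat_series_cseries)
  show ?thesis unfolding C by (rule ext) (simp add: eta)
qed

end

theorem proposition4:
  fixes \<phi> \<psi> :: "bool list \<Rightarrow> complex"
    and A B :: "complex^'n^'n"
  assumes "unital \<phi>" and "unital \<psi>"
    and "c_free \<phi> \<psi>"
  defines "HX \<equiv> apply_Psi (beta_b \<psi> True) A B"
    and "HY \<equiv> apply_Psi (beta_b \<psi> False) A B"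
    and "FX \<equiv> apply_ZPsi (beta_delta \<psi> True) True A B"
    and "FY \<equiv> apply_ZPsi (beta_delta \<psi> False) False A B"
    and "FXphi \<equiv> apply_ZPsi (beta_delta \<phi> True) True A B"
    and "FYphi \<equiv> apply_ZPsi (beta_delta \<phi> False) False A B"
  shows "(ps_inverse_of HX (ps_one - ps_z (\<lambda>n. A ** FX n))) \<and>
    (ps_inverse_of HY (ps_one - ps_z (\<lambda>n. B ** FY n))) \<and>
    (FX = eta_tilde \<psi> True (ps_z (\<lambda>n. HY n ** A))) \<and>
    (FY = eta_tilde \<psi> False (ps_z (\<lambda>n. HX n ** B))) \<and>
    (FXphi = eta_tilde \<phi> True (ps_z (\<lambda>n. HY n ** A))) \<and>
    (FYphi = eta_tilde \<phi> False (ps_z (\<lambda>n. HX n ** B)))"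
proof -
  interpret c_free_pair \<phi> \<psi> using assms(1-3) by unfold_locales
  show ?thesis
    unfolding assms(4-9)
    using beta_b_series_inverse[of True A B] beta_b_series_inverse[of False A B]
      beta_delta_eq_eta_tilde[of \<psi> True A B] beta_delta_eq_eta_tilde[of \<psi> False A B]
      beta_delta_eq_eta_tilde[of \<phi> True A B] beta_delta_eq_eta_tilde[of \<phi> False A B]
    by simp
qed

end
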